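(* Assume (C1), (C2), (PQM) and (G). Let $(\overline\Phi,\underline\Phi)$ be a pair of upper and lower solutions of the wave system (W) with $0\le\underline\Phi(t)\le\overline\Phi(t)\le(M_1,M_2,M_3)$ for all $t\in\mathbb R$, let $\Gamma=\{\Phi\in C(\mathbb R,\mathbb R^3):\underline\Phi\le\Phi\le\overline\Phi\}$, and let $0<\mu<\min\{\delta_1,\delta_2,\delta_3\}$. Then: (i) $F(\Gamma)\subset\Gamma$; more precisely, for every $\Phi\in\Gamma$, $\underline\phi\le F_1(\underline\phi,\underline\varphi,\underline\psi)\le F_1(\Phi)\le F_1(\overline\phi,\overline\varphi,\overline\psi)\le\overline\phi$, $\underline\varphi\le F_2(\overline\phi,\underline\varphi,\overline\psi)\le F_2(\Phi)\le F_2(\underline\phi,\overline\varphi,\underline\psi)\le\overline\varphi$, $\underline\psi\le F_3(\underline\phi,\underline\varphi,\underline\psi)\le F_3(\Phi)\le F_3(\overline\phi,\overline\varphi,\overline\psi)\le\overline\psi$; (ii) $F:\Gamma\to B_\mu(\mathbb R,\mathbb R^3)$ is continuous with respect to $|\cdot|_\mu$; (iii) $F:\Gamma\to\Gamma$ is compact, i.e. $F(\Gamma)$ is relatively compact in $(B_\mu(\mathbb R,\mathbb R^3),|\cdot|_\mu)$.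
   Context: Fix $\sigma>0$, $c>0$, $D_1,D_2,D_3>0$, real numbers $r_1,r_2,r_3$, and constants $k_i>0$, $M_i\ge k_i$ ($i=1,2,3$). Let $X=C([-\sigma,0],\mathbb R)$ with the sup norm. For $\Phi=(\phi,\varphi,\psi)\in C(\mathbb R,\mathbb R^3)$ and $s\in\mathbb R$ the history segment is $\Phi_s=(\phi_s,\varphi_s,\psi_s)\in X^3$, $\phi_s(\theta)=\phi(s+\theta)$ for $\theta\in[-\sigma,0]$. For a constant $a$, $\hat a$ is the constant function with value $a$. Functions $f_{1c},f_{2c},f_{3c}:X^3\to\mathbb R$ are given. A triple $(\chi_1,\chi_2,\chi_3)\in X^3$ is admissible if $0\le\chi_j\le M_j$ on $[-\sigma,0]$, $j=1,2,3$. Inequalities between functions are pointwise and componentwise. Wave system (W): $D_1\phi''(t)-c\phi'(t+r_1)+f_{1c}(\Phi_{t+r_1})=0$, $D_2\varphi''(t)-c\varphi'(t+r_2)+f_{2c}(\Phi_{t+r_2})=0$, $D_3\psi''(t)-c\psi'(t+r_3)+f_{3c}(\Phi_{t+r_3})=0$, $t\in\mathbb R$. (C1): $f_{ic}(\hat0,\hat0,\hat0)=f_{ic}(\hat k_1,\hat k_2,\hat k_3)=0$, $i=1,2,3$. (C2): there are $L_1,L_2,L_3>0$ with $|f_{ic}(\Phi)-f_{ic}(\Psi)|\le L_i\|\Phi-\Psi\|$ for all admissible $\Phi,\Psi\in X^3$ ($\|\cdot\|$ the max of the sup norms of the components). (PQM): there are $\beta_1,\beta_2,\beta_3>0$ such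 that for all admissible $(\phi_1,\varphi_1,\psi_1),(\phi_2,\varphi_2,\psi_2)$ with $\phi_2\le\phi_1,\varphi_2\le\varphi_1,\psi_2\le\psi_1$: (P1) $f_{1c}(\phi_1,\varphi_1,\psi_1)-f_{1c}(\phi_2,\varphi_2,\psi_2)+\beta_1[\phi_1(0)-\phi_2(0)]\ge0$; (P2) $f_{2c}(\phi_1,\varphi_1,\psi_1)-f_{2c}(\phi_1,\varphi_2,\psi_1)+\beta_2[\varphi_1(0)-\varphi_2(0)]\ge0$; (P3) $f_{2c}(\phi_1,\varphi_1,\psi_1)\le f_{2c}(\phi_2,\varphi_1,\psi_1)$; (P4) $f_{2c}(\phi_1,\varphi_1,\psi_1)\le f_{2c}(\phi_1,\varphi_1,\psi_2)$; (P5) $f_{3c}(\phi_1,\varphi_1,\psi_1)-f_{3c}(\phi_2,\varphi_2,\psi_2)+\beta_3[\psi_1(0)-\psi_2(0)]\ge0$. $H_i(\Phi)(t)=f_{ic}(\Phi_{t+r_i})+\beta_i\Phi_{(i)}(t+r_i)$ where $\Phi_{(1)}=\phi,\Phi_{(2)}=\varphi,\Phi_{(3)}=\psi$. (G): for each $i$ there is a continuous kernel $G_i:\mathbb R\to[0,\infty)$ with $G_i(\xi)\le K_ie^{-\delta_i|\xi|}$ ($K_i,\delta_i>0$) such that for every bounded continuous $h$, $x=G_i*h$ is the unique bounded solution of $D_ix''(t)-cx'(t+r_i)-\beta_ix(t+r_i)+h(t)=0$. $F_i(\Phi)(t)=\int_{-\infty}^\infty G_i(t-s)H_i(\Phi)(s)ds$,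 $F=(F_1,F_2,F_3)$. Upper/lower solutions: a pair $\overline\Phi=(\overline\phi,\overline\varphi,\overline\psi)$, $\underline\Phi=(\underline\phi,\underline\varphi,\underline\psi)\in C^2(\mathbb R,\mathbb R^3)$, with all components and their first and second derivatives bounded, such that for all $t$: $D_1\overline\phi''(t)-c\overline\phi'(t+r_1)+f_{1c}(\overline\phi_{t+r_1},\overline\varphi_{t+r_1},\overline\psi_{t+r_1})\le0$, $D_2\overline\varphi''(t)-c\overline\varphi'(t+r_2)+f_{2c}(\underline\phi_{t+r_2},\overline\varphi_{t+r_2},\underline\psi_{t+r_2})\le0$, $D_3\overline\psi''(t)-c\overline\psi'(t+r_3)+f_{3c}(\overline\phi_{t+r_3},\overline\varphi_{t+r_3},\overline\psi_{t+r_3})\le0$, $D_1\underline\phi''(t)-c\underline\phi'(t+r_1)+f_{1c}(\underline\phi_{t+r_1},\underline\varphi_{t+r_1},\underline\psi_{t+r_1})\ge0$, $D_2\underline\varphi''(t)-c\underline\varphi'(t+r_2)+f_{2c}(\overline\phi_{t+r_2},\underline\varphi_{t+r_2},\overline\psi_{t+r_2})\ge0$, $D_3\underline\psi''(t)-c\underline\psi'(t+r_3)+f_{3c}(\underline\phi_{t+r_3},\underline\varphi_{t+r_3},\underline\psi_{t+r_3})\ge0$. $B_\mu(\mathbb R,\mathbb R^3)=\{\Phi\in C(\mathbb R,\mathbb R^3):|\Phi|_\mu<\infty\}$, $|\Phi|_\mu=\sup_{t}e^{-\mu|t|}|\Phi(t)|$. *)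

theory Defs
  imports "HOL-Analysis.Analysis"
begin

text \<open>Triples of real functions, used both for elements of C(R,R^3) and of X^3.\<close>
type_synonym tri = "(real \<Rightarrow> real) \<times> (real \<Rightarrow> real) \<times> (real \<Rightarrow> real)"

definition comp :: "nat \<Rightarrow> tri \<Rightarrow> real \<Rightarrow> real" where
  "comp i \<Phi> = (if i = 1 then fst \<Phi> else if i = 2 then fst (snd \<Phi>) else snd (snd \<Phi>))"

text \<open>Elements of X = C([-sigma,0]) are represented canonically: continuous on [-sigma,0], zero outside.\<close>
definition inX :: "real \<Rightarrow> (real \<Rightarrow> real) \<Rightarrow> bool" where
  "inX \<sigma> \<phi> \<longleftrightarrow> continuous_on {-\<sigma>..0} \<phi> \<and> (\<forall>\<theta>. \<theta> \<notin> {-\<sigma>..0} \<longrightarrow> \<phi> \<theta> = 0)"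

definition seg :: "real \<Rightarrow> (real \<Rightarrow> real) \<Rightarrow> real \<Rightarrow> (real \<Rightarrow> real)" where
  "seg \<sigma> \<phi> s = (\<lambda>\<theta>. if -\<sigma> \<le> \<theta> \<and> \<theta> \<le> 0 then \<phi> (s + \<theta>) else 0)"

definition seg3 :: "real \<Rightarrow> tri \<Rightarrow> real \<Rightarrow> tri" where
  "seg3 \<sigma> \<Phi> s = (seg \<sigma> (fst \<Phi>) s, seg \<sigma> (fst (snd \<Phi>)) s, seg \<sigma> (snd (snd \<Phi>)) s)"

definition hat :: "real \<Rightarrow> real \<Rightarrow> (real \<Rightarrow> real)" where
  "hat \<sigma> a = (\<lambda>\<theta>. if -\<sigma> \<le> \<theta> \<and> \<theta> \<le> 0 then a else 0)"

definition xnorm :: "real \<Rightarrow> (real \<Rightarrow> real) \<Rightarrow> real" where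
  "xnorm \<sigma> \<phi> = (SUP \<theta>\<in>{-\<sigma>..0}. \<bar>\<phi> \<theta>\<bar>)"

definition diff3 :: "tri \<Rightarrow> tri \<Rightarrow> tri" where
  "diff3 \<Phi> \<Psi> = (\<lambda>t. fst \<Phi> t - fst \<Psi> t,
                  \<lambda>t. fst (snd \<Phi>) t - fst (snd \<Psi>) t,
                  \<lambda>t. snd (snd \<Phi>) t - snd (snd \<Psi>) t)"

definition xnorm3 :: "real \<Rightarrow> tri \<Rightarrow> real" where
  "xnorm3 \<sigma> \<Phi> = max (xnorm \<sigma> (fst \<Phi>)) (max (xnorm \<sigma> (fst (snd \<Phi>))) (xnorm \<sigma> (snd (snd \<Phi>))))"

definition admissible :: "real \<Rightarrow> (nat \<Rightarrow> real) \<Rightarrow> tri \<Rightarrow> bool" where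
  "admissible \<sigma> M \<Phi> \<longleftrightarrow> (\<forall>i\<in>{1,2,3}. inX \<sigma> (comp i \<Phi>) \<and>
      (\<forall>\<theta>\<in>{-\<sigma>..0}. 0 \<le> comp i \<Phi> \<theta> \<and> comp i \<Phi> \<theta> \<le> M i))"

definition leX3 :: "real \<Rightarrow> tri \<Rightarrow> tri \<Rightarrow> bool" where
  "leX3 \<sigma> \<Phi> \<Psi> \<longleftrightarrow> (\<forall>i\<in>{1,2,3}. \<forall>\<theta>\<in>{-\<sigma>..0}. comp i \<Phi> \<theta> \<le> comp i \<Psi> \<theta>)"

definition C1 :: "real \<Rightarrow> (nat \<Rightarrow> real) \<Rightarrow> (nat \<Rightarrow> tri \<Rightarrow> real) \<Rightarrow> bool" where
  "C1 \<sigma> k f \<longleftrightarrow> (\<forall>i\<in>{1,2,3}. f i (hat \<sigma> 0, hat \<sigma> 0, hat \<sigma> 0) = 0 \<and>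
                                 f i (hat \<sigma> (k 1), hat \<sigma> (k 2), hat \<sigma> (k 3)) = 0)"

definition C2 :: "real \<Rightarrow> (nat \<Rightarrow> real) \<Rightarrow> (nat \<Rightarrow> tri \<Rightarrow> real) \<Rightarrow> (nat \<Rightarrow> real) \<Rightarrow> bool" where
  "C2 \<sigma> M f L \<longleftrightarrow> (\<forall>i\<in>{1,2,3}. L i > 0 \<and>
     (\<forall>\<Phi> \<Psi>. admissible \<sigma> M \<Phi> \<and> admissible \<sigma> M \<Psi> \<longrightarrow>
        \<bar>f i \<Phi> - f i \<Psi>\<bar> \<le> L i * xnorm3 \<sigma> (diff3 \<Phi> \<Psi>)))"

definition PQM :: "real \<Rightarrow> (nat \<Rightarrow> real) \<Rightarrow> (nat \<Rightarrow> tri \<Rightarrow> real) \<Rightarrow> (nat \<Rightarrow> real) \<Rightarrow> bool" where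
  "PQM \<sigma> M f \<beta> \<longleftrightarrow> (\<forall>i\<in>{1,2,3}. \<beta> i > 0) \<and>
    (\<forall>a1 b1 c1 a2 b2 c2. admissible \<sigma> M (a1, b1, c1) \<and> admissible \<sigma> M (a2, b2, c2) \<and>
        leX3 \<sigma> (a2, b2, c2) (a1, b1, c1) \<longrightarrow>
       f 1 (a1, b1, c1) - f 1 (a2, b2, c2) + \<beta> 1 * (a1 0 - a2 0) \<ge> 0 \<and>
       f 2 (a1, b1, c1) - f 2 (a1, b2, c1) + \<beta> 2 * (b1 0 - b2 0) \<ge> 0 \<and>
       f 2 (a1, b1, c1) \<le> f 2 (a2, b1, c1) \<and>
       f 2 (a1, b1, c1) \<le> f 2 (a1, b1, c2) \<and>
       f 3 (a1, b1, c1) - f 3 (a2, b2, c2) + \<beta> 3 * (c1 0 - c2 0) \<ge> 0)"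

definition is_sol :: "real \<Rightarrow> real \<Rightarrow> real \<Rightarrow> real \<Rightarrow> (real \<Rightarrow> real) \<Rightarrow> (real \<Rightarrow> real) \<Rightarrow> bool" where
  "is_sol D c r \<beta> h x \<longleftrightarrow> (\<forall>t. x differentiable at t) \<and> (\<forall>t. deriv x differentiable at t) \<and>
     (\<forall>t. D * deriv (deriv x) t - c * deriv x (t + r) - \<beta> * x (t + r) + h t = 0)"

definition conv :: "(real \<Rightarrow> real) \<Rightarrow> (real \<Rightarrow> real) \<Rightarrow> real \<Rightarrow> real" where
  "conv G h = (\<lambda>t. integral UNIV (\<lambda>s. G (t - s) * h s))"

definition Gcond :: "(nat \<Rightarrow> real) \<Rightarrow> real \<Rightarrow> (nat \<Rightarrow> real) \<Rightarrow> (nat \<Rightarrow> real) \<Rightarrow>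
    (nat \<Rightarrow> real \<Rightarrow> real) \<Rightarrow> (nat \<Rightarrow> real) \<Rightarrow> (nat \<Rightarrow> real) \<Rightarrow> bool" where
  "Gcond D c r \<beta> G K \<delta> \<longleftrightarrow> (\<forall>i\<in>{1,2,3}. K i > 0 \<and> \<delta> i > 0 \<and> continuous_on UNIV (G i) \<and>
     (\<forall>\<xi>. 0 \<le> G i \<xi> \<and> G i \<xi> \<le> K i * exp (- \<delta> i * \<bar>\<xi>\<bar>)) \<and>
     (\<forall>h. continuous_on UNIV h \<and> bounded (range h) \<longrightarrow>
        bounded (range (conv (G i) h)) \<and> is_sol (D i) c (r i) (\<beta> i) h (conv (G i) h) \<and>
        (\<forall>y. bounded (range y) \<and> is_sol (D i) c (r i) (\<beta> i) h y \<longrightarrow> y = conv (G i) h)))"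

definition H :: "real \<Rightarrow> (nat \<Rightarrow> tri \<Rightarrow> real) \<Rightarrow> (nat \<Rightarrow> real) \<Rightarrow> (nat \<Rightarrow> real) \<Rightarrow> nat \<Rightarrow> tri \<Rightarrow> real \<Rightarrow> real" where
  "H \<sigma> f \<beta> r i \<Phi> t = f i (seg3 \<sigma> \<Phi> (t + r i)) + \<beta> i * comp i \<Phi> (t + r i)"

definition Fop :: "real \<Rightarrow> (nat \<Rightarrow> tri \<Rightarrow> real) \<Rightarrow> (nat \<Rightarrow> real) \<Rightarrow> (nat \<Rightarrow> real) \<Rightarrow>
    (nat \<Rightarrow> real \<Rightarrow> real) \<Rightarrow> nat \<Rightarrow> tri \<Rightarrow> real \<Rightarrow> real" where
  "Fop \<sigma> f \<beta> r G i \<Phi> = conv (G i) (H \<sigma> f \<beta> r i \<Phi>)"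

definition F3 :: "real \<Rightarrow> (nat \<Rightarrow> tri \<Rightarrow> real) \<Rightarrow> (nat \<Rightarrow> real) \<Rightarrow> (nat \<Rightarrow> real) \<Rightarrow>
    (nat \<Rightarrow> real \<Rightarrow> real) \<Rightarrow> tri \<Rightarrow> tri" where
  "F3 \<sigma> f \<beta> r G \<Phi> = (Fop \<sigma> f \<beta> r G 1 \<Phi>, Fop \<sigma> f \<beta> r G 2 \<Phi>, Fop \<sigma> f \<beta> r G 3 \<Phi>)"

definition C2b :: "(real \<Rightarrow> real) \<Rightarrow> bool" where
  "C2b \<phi> \<longleftrightarrow> (\<forall>t. \<phi> differentiable at t) \<and> (\<forall>t. deriv \<phi> differentiable at t) \<and>
     continuous_on UNIV (deriv (deriv \<phi>)) \<and>
     bounded (range \<phi>) \<and> bounded (range (deriv \<phi>)) \<and> bounded (range (deriv (deriv \<phi>)))"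

definition Wop :: "real \<Rightarrow> (nat \<Rightarrow> real) \<Rightarrow> real \<Rightarrow> (nat \<Rightarrow> real) \<Rightarrow> (nat \<Rightarrow> tri \<Rightarrow> real) \<Rightarrow>
    nat \<Rightarrow> (real \<Rightarrow> real) \<Rightarrow> tri \<Rightarrow> real \<Rightarrow> real" where
  "Wop \<sigma> D c r f i \<phi> \<Psi> t = D i * deriv (deriv \<phi>) t - c * deriv \<phi> (t + r i) + f i (seg3 \<sigma> \<Psi> (t + r i))"

definition upper_lower :: "real \<Rightarrow> (nat \<Rightarrow> real) \<Rightarrow> real \<Rightarrow> (nat \<Rightarrow> real) \<Rightarrow> (nat \<Rightarrow> tri \<Rightarrow> real) \<Rightarrow>
    tri \<Rightarrow> tri \<Rightarrow> bool" where
  "upper_lower \<sigma> D c r f up lo \<longleftrightarrow>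
     (\<forall>i\<in>{1,2,3}. C2b (comp i up) \<and> C2b (comp i lo)) \<and>
     (\<forall>t. Wop \<sigma> D c r f 1 (fst up) (fst up, fst (snd up), snd (snd up)) t \<le> 0 \<and>
          Wop \<sigma> D c r f 2 (fst (snd up)) (fst lo, fst (snd up), snd (snd lo)) t \<le> 0 \<and>
          Wop \<sigma> D c r f 3 (snd (snd up)) (fst up, fst (snd up), snd (snd up)) t \<le> 0 \<and>
          Wop \<sigma> D c r f 1 (fst lo) (fst lo, fst (snd lo), snd (snd lo)) t \<ge> 0 \<and>
          Wop \<sigma> D c r f 2 (fst (snd lo)) (fst up, fst (snd lo), snd (snd up)) t \<ge> 0 \<and>
          Wop \<sigma> D c r f 3 (snd (snd lo)) (fst lo, fst (snd lo), snd (snd lo)) t \<ge> 0)"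

definition Gamma :: "tri \<Rightarrow> tri \<Rightarrow> tri set" where
  "Gamma lo up = {\<Phi>. \<forall>i\<in>{1,2,3}. continuous_on UNIV (comp i \<Phi>) \<and>
                     (\<forall>t. comp i lo t \<le> comp i \<Phi> t \<and> comp i \<Phi> t \<le> comp i up t)}"

definition wnorm :: "real \<Rightarrow> tri \<Rightarrow> real" where
  "wnorm \<mu> \<Phi> = (SUP t. exp (- \<mu> * \<bar>t\<bar>) * max \<bar>fst \<Phi> t\<bar> (max \<bar>fst (snd \<Phi>) t\<bar> \<bar>snd (snd \<Phi>) t\<bar>))"

definition Bmu :: "real \<Rightarrow> tri set" where
  "Bmu \<mu> = {\<Phi>. (\<forall>i\<in>{1,2,3}. continuous_on UNIV (comp i \<Phi>)) \<and>
     bdd_above (range (\<lambda>t. exp (- \<mu> * \<bar>t\<bar>) * max \<bar>fst \<Phi> t\<bar> (max \<bar>fst (snd \<Phi>) t\<bar> \<bar>snd (snd \<Phi>) t\<bar>)))}"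

end

theory Submission
  imports Defs "HOL-Complex_Analysis.Great_Picard" "HOL-Real_Asymp.Real_Asymp"
begin

(* Each F_i is the convolution of H_i with a nonnegative kernel G_i decaying like
   exp(-delta_i |x|).  Under (PQM), H_1 and H_3 are monotone and H_2 is monotone for the mixed
   order (increasing in varphi, decreasing in phi and psi); since G_i >= 0 the F_i inherit this.
   An upper or lower solution x equals G_i * h for the source h that makes x an exact solution of
   the linear equation in (G), and its defining inequality says exactly that H_i lies below or
   above h.

   For (ii), (C2) turns a bound |Psi - Phi| <= W exp(mu |t|) into
   |H_i Psi - H_i Phi| <= C W exp(mu |t|), and convolving exp(mu |s|) against
   exp(-delta_i |t - s|) costs only a factor 2 / (delta_i - mu).

   For (iii), F(Gamma) is uniformly bounded and equicontinuous, because translation is continuous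
   in L^1 for G_i.  Arzela-Ascoli on the intervals [-n, n] with a diagonal argument yields a
   locally uniformly convergent subsequence, and the weight exp(-mu |t|) turns locally uniform
   convergence of bounded functions into convergence in the weighted norm. *)

section \<open>Convolution with an exponentially decaying kernel\<close>

definition decaying_kernel :: "(real \<Rightarrow> real) \<Rightarrow> real \<Rightarrow> real \<Rightarrow> bool" where
  "decaying_kernel G K \<delta> \<longleftrightarrow> 0 < \<delta> \<and> continuous_on UNIV G \<and>
     (\<forall>x. 0 \<le> G x \<and> G x \<le> K * exp (- \<delta> * \<bar>x\<bar>))"

lemma decaying_kernelD:
  assumes "decaying_kernel G K \<delta>"
  shows "0 < \<delta>" "continuous_on UNIV G" "0 \<le> G x" "G x \<le> K * exp (- \<delta> * \<bar>x\<bar>)" "0 \<le> K"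
proof -
  show "0 < \<delta>" "continuous_on UNIV G" "0 \<le> G x" "G x \<le> K * exp (- \<delta> * \<bar>x\<bar>)"
    using assms by (auto simp: decaying_kernel_def)
  have "0 \<le> G 0" "G 0 \<le> K" using assms by (auto simp: decaying_kernel_def dest: spec[of _ 0])
  then show "0 \<le> K" by linarith
qed

lemma exp_neg_abs_has_integral:
  fixes a :: real
  assumes "a > 0"
  shows "((\<lambda>x. exp (- a * \<bar>x\<bar>)) has_integral 2 / a) UNIV"
proof -
  let ?f = "\<lambda>x::real. exp (- a * \<bar>x\<bar>)"
  have right: "(?f has_integral 1 / a) {0..}"
    using has_integral_exp_minus_to_infinity[OF assms, of 0]
    by (subst has_integral_cong[where g = "\<lambda>x. exp (- a * x)"]) auto
  then have "?f absolutely_integrable_on {0..} \<and> integral {0..} ?f = 1 / a"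
    by (auto intro: nonnegative_absolutely_integrable_1 simp: has_integral_iff)
  then have "(\<lambda>x. ?f (- x)) absolutely_integrable_on {..0} \<and> integral {..0} (\<lambda>x. ?f (- x)) = 1 / a"
    by (intro has_absolute_integral_reflect_real[THEN iffD2]) auto
  then have left: "(?f has_integral 1 / a) {..0}"
    by (auto simp: has_integral_iff dest: absolutely_integrable_on_def[THEN iffD1])
  have "{0..} \<inter> {..0::real} = {0}" by auto
  then have "negligible ({0..} \<inter> {..0::real})" by simp
  then have "(?f has_integral 1 / a + 1 / a) ({0..} \<union> {..0})"
    by (rule has_integral_Un[OF right left])
  moreover have "{0..} \<union> {..0} = (UNIV :: real set)" by auto
  ultimately show ?thesis by simp
qed

lemma exp_neg_abs_diff_has_integral:
  fixes a t :: real
  assumes "a > 0"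
  shows "((\<lambda>s. exp (- a * \<bar>t - s\<bar>)) has_integral 2 / a) UNIV"
proof -
  let ?f = "\<lambda>x::real. exp (- a * \<bar>x\<bar>)"
  have "?f absolutely_integrable_on (\<lambda>s. t - s) ` UNIV \<and> integral ((\<lambda>s. t - s) ` UNIV) ?f = 2 / a"
    using exp_neg_abs_has_integral[OF assms] surj_def[of "\<lambda>s. t - s"]
    by (auto intro: nonnegative_absolutely_integrable_1 simp: has_integral_iff)
  then have "(\<lambda>s. \<bar>-1\<bar> * ?f (t - s)) absolutely_integrable_on UNIV \<and>
             integral UNIV (\<lambda>s. \<bar>-1\<bar> * ?f (t - s)) = 2 / a"
    by (intro has_absolute_integral_change_of_variables_1'[THEN iffD2])
       (auto intro!: derivative_eq_intros inj_onI)
  then show ?thesis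
    by (auto simp: has_integral_iff dest: absolutely_integrable_on_def[THEN iffD1])
qed

lemma conv_integrand_le:
  assumes G: "decaying_kernel G K \<delta>" and \<mu>: "0 \<le> \<mu>" "\<mu> < \<delta>"
    and h: "\<And>s. \<bar>h s\<bar> \<le> A * exp (\<mu> * \<bar>s\<bar>)"
  shows "\<bar>G (t - s) * h s\<bar> \<le> A * K * exp (\<mu> * \<bar>t\<bar>) * exp (- (\<delta> - \<mu>) * \<bar>t - s\<bar>)"
proof -
  have A: "0 \<le> A" using h[of 0] abs_ge_zero order_trans by fastforce
  have "\<mu> * \<bar>s\<bar> \<le> \<mu> * \<bar>t\<bar> + \<mu> * \<bar>t - s\<bar>"
    using \<mu>(1) mult_left_mono[of "\<bar>s\<bar>" "\<bar>t\<bar> + \<bar>t - s\<bar>" \<mu>] by (simp add: distrib_left)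
  then have exps: "exp (- \<delta> * \<bar>t - s\<bar>) * exp (\<mu> * \<bar>s\<bar>) \<le> exp (\<mu> * \<bar>t\<bar>) * exp (- (\<delta> - \<mu>) * \<bar>t - s\<bar>)"
    by (simp add: exp_add[symmetric] algebra_simps)
  have "\<bar>G (t - s) * h s\<bar> \<le> K * exp (- \<delta> * \<bar>t - s\<bar>) * (A * exp (\<mu> * \<bar>s\<bar>))"
    unfolding abs_mult using decaying_kernelD[OF G]
    by (intro mult_mono h) (auto simp: abs_of_nonneg)
  also have "\<dots> = A * K * (exp (- \<delta> * \<bar>t - s\<bar>) * exp (\<mu> * \<bar>s\<bar>))" by (simp add: mult_ac)
  also have "\<dots> \<le> A * K * exp (\<mu> * \<bar>t\<bar>) * exp (- (\<delta> - \<mu>) * \<bar>t - s\<bar>)"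
    using exps A decaying_kernelD(5)[OF G] by (simp add: mult.assoc mult_left_mono)
  finally show ?thesis .
qed

lemma
  assumes G: "decaying_kernel G K \<delta>" and \<mu>: "0 \<le> \<mu>" "\<mu> < \<delta>"
    and h: "continuous_on UNIV h" "\<And>s. \<bar>h s\<bar> \<le> A * exp (\<mu> * \<bar>s\<bar>)"
  shows conv_integrable: "(\<lambda>s. G (t - s) * h s) integrable_on UNIV"
    and abs_conv_le: "\<bar>conv G h t\<bar> \<le> A * K * (2 / (\<delta> - \<mu>)) * exp (\<mu> * \<bar>t\<bar>)"
proof -
  let ?g = "\<lambda>s. A * K * exp (\<mu> * \<bar>t\<bar>) * exp (- (\<delta> - \<mu>) * \<bar>t - s\<bar>)"
  have g: "(?g has_integral A * K * exp (\<mu> * \<bar>t\<bar>) * (2 / (\<delta> - \<mu>))) UNIV"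
    using \<mu> by (intro has_integral_mult_right exp_neg_abs_diff_has_integral) simp
  have le: "norm (G (t - s) * h s) \<le> ?g s" for s
    using conv_integrand_le[OF G \<mu> h(2)] by simp
  have "continuous_on UNIV (\<lambda>s. G (t - s) * h s)"
    by (intro continuous_intros continuous_on_compose2[OF decaying_kernelD(2)[OF G]] h) auto
  then have "(\<lambda>s. G (t - s) * h s) integrable_on cbox a b" for a b
    by (meson continuous_on_subset integrable_continuous subset_UNIV)
  then show int: "(\<lambda>s. G (t - s) * h s) integrable_on UNIV"
    by (rule integrable_on_all_intervals_UNIV[OF _ le has_integral_integrable[OF g]])
  have "norm (integral UNIV (\<lambda>s. G (t - s) * h s)) \<le> integral UNIV ?g"
    using g by (intro integral_norm_bound_integral[OF int _ le]) auto
  then show "\<bar>conv G h t\<bar> \<le> A * K * (2 / (\<delta> - \<mu>)) * exp (\<mu> * \<bar>t\<bar>)"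
    using g by (simp add: conv_def has_integral_iff mult_ac)
qed

lemma conv_integrable_bounded:
  assumes G: "decaying_kernel G K \<delta>" and h: "continuous_on UNIV h" "\<And>s. \<bar>h s\<bar> \<le> B"
  shows "(\<lambda>s. G (t - s) * h s) integrable_on UNIV"
  using conv_integrable[OF G order_refl decaying_kernelD(1)[OF G] h(1), of B] h(2) by simp

lemma conv_mono:
  assumes G: "decaying_kernel G K \<delta>"
    and h1: "continuous_on UNIV h1" "\<And>s. \<bar>h1 s\<bar> \<le> B1"
    and h2: "continuous_on UNIV h2" "\<And>s. \<bar>h2 s\<bar> \<le> B2"
    and le: "\<And>s. h1 s \<le> h2 s"
  shows "conv G h1 t \<le> conv G h2 t"
  unfolding conv_def
  using decaying_kernelD(3)[OF G] le
  by (intro integral_le conv_integrable_bounded[OF G h1] conv_integrable_bounded[OF G h2])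
     (simp add: mult_left_mono)

lemma conv_diff:
  assumes G: "decaying_kernel G K \<delta>"
    and h1: "continuous_on UNIV h1" "\<And>s. \<bar>h1 s\<bar> \<le> B1"
    and h2: "continuous_on UNIV h2" "\<And>s. \<bar>h2 s\<bar> \<le> B2"
  shows "conv G h1 t - conv G h2 t = conv G (\<lambda>s. h1 s - h2 s) t"
  unfolding conv_def right_diff_distrib
  by (rule integral_diff[symmetric, OF conv_integrable_bounded[OF G h1] conv_integrable_bounded[OF G h2]])

lemma exists_exp_tail_small:
  fixes a e C :: real
  assumes "0 < a" "0 < e"
  obtains R where "0 \<le> R" "C * exp (- a * R) < e"
proof -
  have "((\<lambda>R. C * exp (- a * R)) \<longlongrightarrow> 0) at_top"
    using assms(1) by real_asymp
  then have "eventually (\<lambda>R. C * exp (- a * R) < e) at_top"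
    using assms(2) by (rule order_tendstoD(2))
  then obtain N where "\<And>R. N \<le> R \<Longrightarrow> C * exp (- a * R) < e"
    by (auto simp: eventually_at_top_linorder)
  then show ?thesis
    using that[of "max N 0"] by simp
qed

lemma kernel_shift_tail_le:
  assumes G: "decaying_kernel G K \<delta>" and tt: "\<bar>t - t'\<bar> \<le> 1" and R: "R \<le> \<bar>t - s\<bar>"
  shows "\<bar>G (t - s) - G (t' - s)\<bar> \<le> 2 * K * exp \<delta> * exp (- (\<delta> / 2) * R) * exp (- (\<delta> / 2) * \<bar>t - s\<bar>)"
proof -
  note kernel = decaying_kernelD[OF G]
  let ?E = "exp \<delta> * exp (- \<delta> * \<bar>t - s\<bar>)"
  have "\<delta> * \<bar>t - s\<bar> \<le> \<delta> * (\<bar>t' - s\<bar> + 1)"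
    using tt kernel(1) by (intro mult_left_mono) auto
  then have "exp (- \<delta> * \<bar>t' - s\<bar>) \<le> ?E"
    by (simp add: exp_add[symmetric] algebra_simps)
  then have "K * exp (- \<delta> * \<bar>t' - s\<bar>) \<le> K * ?E"
    using kernel(5) by (rule mult_left_mono)
  moreover have "K * exp (- \<delta> * \<bar>t - s\<bar>) \<le> K * ?E"
    using kernel(1,5) by (intro mult_left_mono) auto
  moreover have "\<bar>G (t - s) - G (t' - s)\<bar> \<le> K * exp (- \<delta> * \<bar>t - s\<bar>) + K * exp (- \<delta> * \<bar>t' - s\<bar>)"
    using kernel(3,4)[of "t - s"] kernel(3,4)[of "t' - s"] by (simp add: abs_minus_commute)
  ultimately have "\<bar>G (t - s) - G (t' - s)\<bar> \<le> 2 * K * exp \<delta> * exp (- \<delta> * \<bar>t - s\<bar>)"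
    by (simp add: mult_ac)
  moreover have "\<delta> * R \<le> \<delta> * \<bar>t - s\<bar>"
    using R kernel(1) by (intro mult_left_mono) auto
  then have "\<delta> / 2 * R + \<delta> / 2 * \<bar>t - s\<bar> \<le> \<delta> * \<bar>t - s\<bar>"
    by linarith
  then have "exp (- \<delta> * \<bar>t - s\<bar>) \<le> exp (- (\<delta> / 2) * R) * exp (- (\<delta> / 2) * \<bar>t - s\<bar>)"
    by (simp add: exp_add[symmetric])
  then have "2 * K * exp \<delta> * exp (- \<delta> * \<bar>t - s\<bar>) \<le> 2 * K * exp \<delta> * exp (- (\<delta> / 2) * R) * exp (- (\<delta> / 2) * \<bar>t - s\<bar>)"
    using kernel(5) by (simp add: mult.assoc mult_left_mono)
  ultimately show ?thesis by linarith
qed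

lemma has_integral_window:
  fixes R t \<omega> :: real
  assumes "0 \<le> R"
  shows "((\<lambda>s. if s \<in> {t-R..t+R} then \<omega> else 0) has_integral 2 * R * \<omega>) UNIV"
  using has_integral_const_real[of \<omega> "t - R" "t + R"] assms
  by (subst has_integral_restrict_UNIV) simp

lemma kernel_shift_integrable:
  assumes G: "decaying_kernel G K \<delta>"
  shows "(\<lambda>s. \<bar>G (t - s) - G (t' - s)\<bar>) integrable_on UNIV"
proof -
  note kernel = decaying_kernelD[OF G]
  let ?g = "\<lambda>s. K * exp (- \<delta> * \<bar>t - s\<bar>) + K * exp (- \<delta> * \<bar>t' - s\<bar>)"
  have g: "?g integrable_on UNIV"
    using has_integral_add[OF has_integral_mult_right has_integral_mult_right,
        OF exp_neg_abs_diff_has_integral[OF kernel(1), of t] exp_neg_abs_diff_has_integral[OF kernel(1), of t']]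
    by (rule has_integral_integrable)
  have le: "norm \<bar>G (t - s) - G (t' - s)\<bar> \<le> ?g s" for s
    using kernel(3,4)[of "t - s"] kernel(3,4)[of "t' - s"] by (simp add: abs_minus_commute)
  have "continuous_on UNIV (\<lambda>s. \<bar>G (t - s) - G (t' - s)\<bar>)"
    by (intro continuous_intros continuous_on_compose2[OF kernel(2)]) auto
  then have "(\<lambda>s. \<bar>G (t - s) - G (t' - s)\<bar>) integrable_on cbox a b" for a b
    by (meson continuous_on_subset integrable_continuous subset_UNIV)
  then show ?thesis
    by (rule integrable_on_all_intervals_UNIV[OF _ le g])
qed

text \<open>Continuity of translation in L1: split the line into a window of radius R, where G is
  uniformly continuous, and the tails, whose mass is small by exponential decay.\<close>
lemma kernel_shift_integral_small:
  assumes G: "decaying_kernel G K \<delta>" and e: "0 < e"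
  obtains \<eta> where "0 < \<eta>"
    and "\<And>t t'. \<bar>t - t'\<bar> < \<eta> \<Longrightarrow> integral UNIV (\<lambda>s. \<bar>G (t - s) - G (t' - s)\<bar>) \<le> e"
proof -
  note kernel = decaying_kernelD[OF G]
  define C where "C = 2 * K * exp \<delta> * (4 / \<delta>)"
  obtain R where R: "0 \<le> R" "C * exp (- (\<delta> / 2) * R) < e / 2"
    using exists_exp_tail_small[of "\<delta> / 2" "e / 2"] kernel(1) e by auto
  define \<omega> where "\<omega> = e / (2 * (2 * R + 1))"
  have \<omega>: "0 < \<omega>" "2 * R * \<omega> \<le> e / 2"
    using e R(1) by (auto simp: \<omega>_def field_simps)
  have "uniformly_continuous_on {-R-1..R+1} G"
    by (rule compact_uniformly_continuous) (auto intro: continuous_on_subset[OF kernel(2)])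
  then obtain d where d: "0 < d"
    and unif: "\<And>x y. x \<in> {-R-1..R+1} \<Longrightarrow> y \<in> {-R-1..R+1} \<Longrightarrow> dist y x < d \<Longrightarrow> dist (G y) (G x) < \<omega>"
    using \<omega>(1) unfolding uniformly_continuous_on_def by metis
  show ?thesis
  proof (rule that[of "min d 1"])
    fix t t' :: real assume tt: "\<bar>t - t'\<bar> < min d 1"
    let ?tail = "\<lambda>s. 2 * K * exp \<delta> * exp (- (\<delta> / 2) * R) * exp (- (\<delta> / 2) * \<bar>t - s\<bar>)"
    define g where "g s = (if s \<in> {t-R..t+R} then \<omega> else 0) + ?tail s" for s
    have "((\<lambda>s. exp (- (\<delta> / 2) * \<bar>t - s\<bar>)) has_integral 2 / (\<delta> / 2)) UNIV"
      by (rule exp_neg_abs_diff_has_integral) (use kernel(1) in simp)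
    from has_integral_mult_right[OF this, of "2 * K * exp \<delta> * exp (- (\<delta> / 2) * R)"]
    have "(?tail has_integral C * exp (- (\<delta> / 2) * R)) UNIV"
      by (simp add: C_def mult_ac)
    then have g: "(g has_integral 2 * R * \<omega> + C * exp (- (\<delta> / 2) * R)) UNIV"
      unfolding g_def by (rule has_integral_add[OF has_integral_window[OF R(1)]])
    have "\<bar>G (t - s) - G (t' - s)\<bar> \<le> g s" for s
    proof (cases "s \<in> {t-R..t+R}")
      case True
      have "t - s \<in> {-R-1..R+1}" "t' - s \<in> {-R-1..R+1}" "dist (t' - s) (t - s) < d"
        using True tt by (auto simp: dist_real_def abs_minus_commute)
      then have "\<bar>G (t - s) - G (t' - s)\<bar> < \<omega>"
        using unif by (fastforce simp: dist_real_def abs_minus_commute)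
      moreover have "0 \<le> ?tail s" using kernel(5) by simp
      ultimately show ?thesis using True by (simp add: g_def)
    next
      case False
      then have "g s = ?tail s" by (auto simp: g_def)
      moreover have "R \<le> \<bar>t - s\<bar>" using False by auto
      ultimately show ?thesis
        using kernel_shift_tail_le[OF G, of t t' R s] tt by simp
    qed
    then have "integral UNIV (\<lambda>s. \<bar>G (t - s) - G (t' - s)\<bar>) \<le> integral UNIV g"
      by (intro integral_le kernel_shift_integrable[OF G] has_integral_integrable[OF g])
    also have "\<dots> = 2 * R * \<omega> + C * exp (- (\<delta> / 2) * R)"
      using g by (rule integral_unique)
    finally show "integral UNIV (\<lambda>s. \<bar>G (t - s) - G (t' - s)\<bar>) \<le> e"
      using \<omega>(2) R(2) by linarith
  qed (use d in simp)
qed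

lemma conv_equicontinuous:
  assumes G: "decaying_kernel G K \<delta>" and e: "0 < e"
  obtains \<eta> where "0 < \<eta>"
    and "\<And>h t t'. continuous_on UNIV h \<Longrightarrow> (\<And>s. \<bar>h s\<bar> \<le> B) \<Longrightarrow> \<bar>t - t'\<bar> < \<eta> \<Longrightarrow>
           \<bar>conv G h t - conv G h t'\<bar> \<le> e"
proof -
  obtain \<eta> where \<eta>: "0 < \<eta>"
    and small: "\<And>t t'. \<bar>t - t'\<bar> < \<eta> \<Longrightarrow> integral UNIV (\<lambda>s. \<bar>G (t - s) - G (t' - s)\<bar>) \<le> e / (\<bar>B\<bar> + 1)"
    using kernel_shift_integral_small[OF G, of "e / (\<bar>B\<bar> + 1)"] e by auto
  show ?thesis
  proof (rule that[OF \<eta>])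
    fix h :: "real \<Rightarrow> real" and t t' :: real
    assume h: "continuous_on UNIV h" "\<And>s. \<bar>h s\<bar> \<le> B" and tt: "\<bar>t - t'\<bar> < \<eta>"
    have "(\<lambda>s. G (t - s) * h s - G (t' - s) * h s) integrable_on UNIV"
      by (intro integrable_diff conv_integrable_bounded[OF G h])
    then have int: "(\<lambda>s. (G (t - s) - G (t' - s)) * h s) integrable_on UNIV"
      by (simp add: left_diff_distrib)
    have le: "norm ((G (t - s) - G (t' - s)) * h s) \<le> \<bar>B\<bar> * \<bar>G (t - s) - G (t' - s)\<bar>" for s
      using mult_right_mono[of "\<bar>h s\<bar>" "\<bar>B\<bar>" "\<bar>G (t - s) - G (t' - s)\<bar>"] h(2)[of s]
      by (simp add: abs_mult mult.commute)
    have "conv G h t - conv G h t' = integral UNIV (\<lambda>s. (G (t - s) - G (t' - s)) * h s)"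
      unfolding conv_def left_diff_distrib
      by (rule integral_diff[symmetric, OF conv_integrable_bounded[OF G h] conv_integrable_bounded[OF G h]])
    also have "\<bar>\<dots>\<bar> \<le> integral UNIV (\<lambda>s. \<bar>B\<bar> * \<bar>G (t - s) - G (t' - s)\<bar>)"
      using integral_norm_bound_integral[OF int integrable_on_mult_right[OF kernel_shift_integrable[OF G]] le]
      by simp
    also have "\<dots> \<le> \<bar>B\<bar> * (e / (\<bar>B\<bar> + 1))"
      using mult_left_mono[OF small[OF tt] abs_ge_zero] by simp
    also have "\<dots> \<le> e"
      using e by (simp add: field_simps)
    finally show "\<bar>conv G h t - conv G h t'\<bar> \<le> e" .
  qed
qed

section \<open>Profiles and history segments\<close>

text \<open>The (Suc 0) instance is needed because simp turns i \<in> {1,2,3} into i = Suc 0 \<or> i = 2 \<or> i = 3.\<close>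
lemma comp_simps [simp]:
  "comp 1 \<Phi> = fst \<Phi>" "comp (Suc 0) \<Phi> = fst \<Phi>" "comp 2 \<Phi> = fst (snd \<Phi>)" "comp 3 \<Phi> = snd (snd \<Phi>)"
  by (simp_all add: comp_def)

lemma comp_seg3: "comp i (seg3 \<sigma> \<Phi> s) = seg \<sigma> (comp i \<Phi>) s"
  by (simp add: comp_def seg3_def)

lemma comp_diff3: "comp i (diff3 \<Phi> \<Psi>) t = comp i \<Phi> t - comp i \<Psi> t"
  by (simp add: comp_def diff3_def)

lemma comp_F3: "i \<in> {1,2,3} \<Longrightarrow> comp i (F3 \<sigma> f \<beta> r G \<Phi>) = Fop \<sigma> f \<beta> r G i \<Phi>"
  by (auto simp: F3_def)

definition profile_vec :: "tri \<Rightarrow> real \<Rightarrow> real \<times> real \<times> real" where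
  "profile_vec \<Phi> t = (fst \<Phi> t, fst (snd \<Phi>) t, snd (snd \<Phi>) t)"

lemma abs_components_le_norm:
  fixes v :: "real \<times> real \<times> real"
  shows "\<bar>fst v\<bar> \<le> norm v" "\<bar>fst (snd v)\<bar> \<le> norm v" "\<bar>snd (snd v)\<bar> \<le> norm v"
proof -
  show "\<bar>fst v\<bar> \<le> norm v"
    using norm_fst_le[of "fst v" "snd v"] by simp
  have "norm (snd v) \<le> norm v"
    using norm_snd_le[of "snd v" "fst v"] by simp
  then show "\<bar>fst (snd v)\<bar> \<le> norm v" "\<bar>snd (snd v)\<bar> \<le> norm v"
    using norm_fst_le[of "fst (snd v)" "snd (snd v)"] norm_snd_le[of "snd (snd v)" "fst (snd v)"]
    by auto
qed

lemma abs_comp_diff_le_dist: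
  assumes "i \<in> {1,2,3}"
  shows "\<bar>comp i \<Phi> a - comp i \<Psi> b\<bar> \<le> dist (profile_vec \<Phi> a) (profile_vec \<Psi> b)"
  using assms abs_components_le_norm[of "profile_vec \<Phi> a - profile_vec \<Psi> b"]
  by (auto simp: dist_norm profile_vec_def)

lemma abs_comp_le_norm_profile_vec:
  assumes "i \<in> {1,2,3}"
  shows "\<bar>comp i \<Phi> t\<bar> \<le> norm (profile_vec \<Phi> t)"
  using assms abs_components_le_norm[of "profile_vec \<Phi> t"] by (auto simp: profile_vec_def)

lemma norm_triple_le:
  fixes v :: "real \<times> real \<times> real"
  shows "norm v \<le> \<bar>fst v\<bar> + \<bar>fst (snd v)\<bar> + \<bar>snd (snd v)\<bar>"
proof -
  have "norm v \<le> norm (fst v) + norm (snd v)"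
    using norm_Pair_le[of "fst v" "snd v"] by simp
  also have "\<dots> \<le> norm (fst v) + (norm (fst (snd v)) + norm (snd (snd v)))"
    using norm_Pair_le[of "fst (snd v)" "snd (snd v)"] by simp
  finally show ?thesis by simp
qed

lemma profile_vec_diff3: "profile_vec (diff3 \<Phi> \<Psi>) t = profile_vec \<Phi> t - profile_vec \<Psi> t"
  by (simp add: profile_vec_def diff3_def)

lemma continuous_on_profile_vec:
  "(\<And>i. i \<in> {1,2,3} \<Longrightarrow> continuous_on UNIV (comp i \<Phi>)) \<Longrightarrow> continuous_on UNIV (profile_vec \<Phi>)"
  unfolding profile_vec_def using comp_simps by (metis continuous_on_Pair insertCI)

definition admissible_profile :: "(nat \<Rightarrow> real) \<Rightarrow> tri \<Rightarrow> bool" where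
  "admissible_profile M \<Phi> \<longleftrightarrow>
     (\<forall>i\<in>{1,2,3}. continuous_on UNIV (comp i \<Phi>) \<and> (\<forall>t. 0 \<le> comp i \<Phi> t \<and> comp i \<Phi> t \<le> M i))"

definition profile_le :: "tri \<Rightarrow> tri \<Rightarrow> bool" where
  "profile_le \<Phi> \<Psi> \<longleftrightarrow> (\<forall>i\<in>{1,2,3}. \<forall>t. comp i \<Phi> t \<le> comp i \<Psi> t)"

lemma profile_le_iff:
  "profile_le \<Phi> \<Psi> \<longleftrightarrow> (\<forall>t. fst \<Phi> t \<le> fst \<Psi> t) \<and> (\<forall>t. fst (snd \<Phi>) t \<le> fst (snd \<Psi>) t) \<and>
     (\<forall>t. snd (snd \<Phi>) t \<le> snd (snd \<Psi>) t)"
  by (simp add: profile_le_def)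

lemma admissible_profileD:
  assumes "admissible_profile M \<Phi>" "i \<in> {1,2,3}"
  shows "continuous_on UNIV (comp i \<Phi>)" "0 \<le> comp i \<Phi> t" "comp i \<Phi> t \<le> M i"
  using assms unfolding admissible_profile_def by blast+

lemma admissible_profile_mix:
  assumes "admissible_profile M A" "admissible_profile M B" "admissible_profile M C"
  shows "admissible_profile M (fst A, fst (snd B), snd (snd C))"
  using assms unfolding admissible_profile_def comp_def by auto

lemma seg_inX:
  assumes "continuous_on UNIV \<phi>"
  shows "inX \<sigma> (seg \<sigma> \<phi> s)"
proof -
  have "continuous_on {-\<sigma>..0} (\<lambda>\<theta>. \<phi> (s + \<theta>))"
    by (intro continuous_on_compose2[OF assms] continuous_intros) auto
  then have "continuous_on {-\<sigma>..0} (seg \<sigma> \<phi> s)"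
    by (rule continuous_on_eq) (auto simp: seg_def)
  then show ?thesis by (auto simp: inX_def seg_def)
qed

lemma admissible_seg3:
  assumes "admissible_profile M \<Phi>"
  shows "admissible \<sigma> M (seg3 \<sigma> \<Phi> s)"
  using assms seg_inX unfolding admissible_def admissible_profile_def comp_seg3
  by (auto simp: seg_def)

lemma leX3_seg3:
  assumes "profile_le \<Phi> \<Psi>"
  shows "leX3 \<sigma> (seg3 \<sigma> \<Phi> s) (seg3 \<sigma> \<Psi> s)"
  using assms unfolding leX3_def profile_le_def comp_seg3 by (auto simp: seg_def)

lemma seg_at_0: "0 \<le> \<sigma> \<Longrightarrow> seg \<sigma> \<phi> s 0 = \<phi> s"
  by (simp add: seg_def)

lemma xnorm3_diff_seg3_le:
  assumes "0 \<le> \<sigma>"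
    and "\<And>i \<theta>. i \<in> {1,2,3} \<Longrightarrow> \<theta> \<in> {-\<sigma>..0} \<Longrightarrow> \<bar>comp i \<Phi> (s + \<theta>) - comp i \<Psi> (s' + \<theta>)\<bar> \<le> e"
  shows "xnorm3 \<sigma> (diff3 (seg3 \<sigma> \<Phi> s) (seg3 \<sigma> \<Psi> s')) \<le> e"
proof -
  have "xnorm \<sigma> (comp i (diff3 (seg3 \<sigma> \<Phi> s) (seg3 \<sigma> \<Psi> s'))) \<le> e" if "i \<in> {1,2,3}" for i
    unfolding xnorm_def using assms that
    by (intro cSUP_least) (auto simp: comp_diff3 comp_seg3 seg_def)
  from this[of 1] this[of 2] this[of 3] show ?thesis
    by (simp add: xnorm3_def)
qed

lemma seg_shift_close:
  fixes \<phi> :: "real \<Rightarrow> 'a::metric_space"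
  assumes "continuous_on UNIV \<phi>" and "0 < e"
  obtains d where "0 < d" "\<And>s \<theta>. \<bar>s - p\<bar> < d \<Longrightarrow> \<theta> \<in> {-\<sigma>..0} \<Longrightarrow> dist (\<phi> (s + \<theta>)) (\<phi> (p + \<theta>)) < e"
proof -
  have "uniformly_continuous_on {p-\<sigma>-1..p+1} \<phi>"
    using assms(1) by (intro compact_uniformly_continuous) (auto intro: continuous_on_subset)
  then obtain d where d: "0 < d"
    and unif: "\<And>x y. x \<in> {p-\<sigma>-1..p+1} \<Longrightarrow> y \<in> {p-\<sigma>-1..p+1} \<Longrightarrow> dist y x < d \<Longrightarrow> dist (\<phi> y) (\<phi> x) < e"
    using assms(2) unfolding uniformly_continuous_on_def by metis
  show ?thesis
  proof (rule that[of "min d 1"])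
    fix s \<theta> assume "\<bar>s - p\<bar> < min d 1" "\<theta> \<in> {-\<sigma>..0}"
    then show "dist (\<phi> (s + \<theta>)) (\<phi> (p + \<theta>)) < e"
      by (intro unif) (auto simp: dist_real_def)
  qed (use d in simp)
qed

section \<open>The weighted norm\<close>

definition weighted_abs :: "real \<Rightarrow> tri \<Rightarrow> real \<Rightarrow> real" where
  "weighted_abs \<mu> \<Phi> t = exp (- \<mu> * \<bar>t\<bar>) * max \<bar>fst \<Phi> t\<bar> (max \<bar>fst (snd \<Phi>) t\<bar> \<bar>snd (snd \<Phi>) t\<bar>)"

lemma wnorm_eq_SUP: "wnorm \<mu> \<Phi> = (SUP t. weighted_abs \<mu> \<Phi> t)"
  by (simp add: wnorm_def weighted_abs_def)

lemma weighted_abs_nonneg: "0 \<le> weighted_abs \<mu> \<Phi> t"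
  by (simp add: weighted_abs_def)

lemma weighted_abs_leI:
  assumes "\<And>i. i \<in> {1,2,3} \<Longrightarrow> exp (- \<mu> * \<bar>t\<bar>) * \<bar>comp i \<Phi> t\<bar> \<le> C"
  shows "weighted_abs \<mu> \<Phi> t \<le> C"
  using assms[of 1] assms[of 2] assms[of 3] by (simp add: weighted_abs_def max_def)

lemma exp_abs_comp_le_weighted_abs:
  assumes "i \<in> {1,2,3}"
  shows "exp (- \<mu> * \<bar>t\<bar>) * \<bar>comp i \<Phi> t\<bar> \<le> weighted_abs \<mu> \<Phi> t"
  using assms unfolding weighted_abs_def by (auto intro!: mult_left_mono)

lemma weighted_abs_le_norm: "weighted_abs \<mu> \<Phi> t \<le> exp (- \<mu> * \<bar>t\<bar>) * norm (profile_vec \<Phi> t)"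
  by (intro weighted_abs_leI mult_left_mono abs_comp_le_norm_profile_vec) auto

lemma weighted_abs_le_bound:
  assumes "0 \<le> \<mu>" "\<And>i t. i \<in> {1,2,3} \<Longrightarrow> \<bar>comp i \<Phi> t\<bar> \<le> B"
  shows "weighted_abs \<mu> \<Phi> t \<le> B"
proof (rule weighted_abs_leI)
  fix i :: nat assume "i \<in> {1,2,3}"
  then have "\<bar>comp i \<Phi> t\<bar> \<le> B" by (rule assms(2))
  moreover have "exp (- \<mu> * \<bar>t\<bar>) * \<bar>comp i \<Phi> t\<bar> \<le> \<bar>comp i \<Phi> t\<bar>"
    using assms(1) by (intro mult_left_le_one_le) auto
  ultimately show "exp (- \<mu> * \<bar>t\<bar>) * \<bar>comp i \<Phi> t\<bar> \<le> B" by linarith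
qed

lemma wnorm_le: "(\<And>t. weighted_abs \<mu> \<Phi> t \<le> C) \<Longrightarrow> wnorm \<mu> \<Phi> \<le> C"
  unfolding wnorm_eq_SUP by (rule cSUP_least) auto

lemma
  assumes "0 \<le> \<mu>" "\<And>i t. i \<in> {1,2,3} \<Longrightarrow> \<bar>comp i \<Phi> t\<bar> \<le> B"
  shows weighted_abs_le_wnorm: "weighted_abs \<mu> \<Phi> t \<le> wnorm \<mu> \<Phi>"
    and wnorm_nonneg: "0 \<le> wnorm \<mu> \<Phi>"
proof -
  have "bdd_above (range (weighted_abs \<mu> \<Phi>))"
    using weighted_abs_le_bound[OF assms] by (intro bdd_aboveI2)
  then show le: "weighted_abs \<mu> \<Phi> t \<le> wnorm \<mu> \<Phi>" for t
    unfolding wnorm_eq_SUP by (rule cSUP_upper[OF UNIV_I])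
  show "0 \<le> wnorm \<mu> \<Phi>"
    using le[of 0] weighted_abs_nonneg[of \<mu> \<Phi> 0] by linarith
qed

lemma abs_comp_le_wnorm:
  assumes "0 \<le> \<mu>" "\<And>i t. i \<in> {1,2,3} \<Longrightarrow> \<bar>comp i \<Phi> t\<bar> \<le> B" "i \<in> {1,2,3}"
  shows "\<bar>comp i \<Phi> u\<bar> \<le> wnorm \<mu> \<Phi> * exp (\<mu> * \<bar>u\<bar>)"
proof -
  have weighted: "exp (- \<mu> * \<bar>u\<bar>) * \<bar>comp i \<Phi> u\<bar> \<le> wnorm \<mu> \<Phi>"
    using exp_abs_comp_le_weighted_abs[OF assms(3)] weighted_abs_le_wnorm[OF assms(1,2)]
    by (rule order_trans)
  have "\<bar>comp i \<Phi> u\<bar> = exp (\<mu> * \<bar>u\<bar>) * (exp (- \<mu> * \<bar>u\<bar>) * \<bar>comp i \<Phi> u\<bar>)"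
    by (simp add: mult.assoc[symmetric] exp_add[symmetric])
  also have "\<dots> \<le> exp (\<mu> * \<bar>u\<bar>) * wnorm \<mu> \<Phi>"
    by (rule mult_left_mono[OF weighted]) simp
  also have "\<dots> = wnorm \<mu> \<Phi> * exp (\<mu> * \<bar>u\<bar>)"
    by (rule mult.commute)
  finally show ?thesis .
qed

lemma in_BmuI:
  assumes "0 \<le> \<mu>" "\<And>i. i \<in> {1,2,3} \<Longrightarrow> continuous_on UNIV (comp i \<Phi>)"
    and "\<And>i t. i \<in> {1,2,3} \<Longrightarrow> \<bar>comp i \<Phi> t\<bar> \<le> B"
  shows "\<Phi> \<in> Bmu \<mu>"
proof -
  have "bdd_above (range (weighted_abs \<mu> \<Phi>))"
    using weighted_abs_le_bound[OF assms(1,3)] by (intro bdd_aboveI2)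
  then show ?thesis
    using assms(2)[of 1] assms(2)[of 2] assms(2)[of 3] unfolding Bmu_def weighted_abs_def[abs_def] by simp
qed

lemma wnorm_le_of_small_on_interval:
  assumes \<mu>: "0 \<le> \<mu>" and bound: "\<And>t. norm (profile_vec \<Phi> t) \<le> B"
    and tail: "B * exp (- \<mu> * R) \<le> a" and small: "\<And>t. t \<in> {-R..R} \<Longrightarrow> norm (profile_vec \<Phi> t) \<le> a"
  shows "wnorm \<mu> \<Phi> \<le> a"
proof (rule wnorm_le)
  fix t
  have "weighted_abs \<mu> \<Phi> t \<le> exp (- \<mu> * \<bar>t\<bar>) * norm (profile_vec \<Phi> t)"
    by (rule weighted_abs_le_norm)
  also have "\<dots> \<le> a"
  proof (cases "\<bar>t\<bar> \<le> R")
    case True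
    then have "norm (profile_vec \<Phi> t) \<le> a"
      by (intro small) (auto simp: abs_le_iff)
    moreover have "exp (- \<mu> * \<bar>t\<bar>) * norm (profile_vec \<Phi> t) \<le> norm (profile_vec \<Phi> t)"
      using \<mu> by (intro mult_left_le_one_le) auto
    ultimately show ?thesis by linarith
  next
    case False
    then have "\<mu> * R \<le> \<mu> * \<bar>t\<bar>"
      using \<mu> by (intro mult_left_mono) auto
    then have "exp (- \<mu> * \<bar>t\<bar>) * norm (profile_vec \<Phi> t) \<le> exp (- \<mu> * R) * B"
      using bound by (intro mult_mono) auto
    then have "exp (- \<mu> * \<bar>t\<bar>) * norm (profile_vec \<Phi> t) \<le> B * exp (- \<mu> * R)"
      by (simp add: mult.commute)
    then show ?thesis using tail by linarith
  qed
  finally show "weighted_abs \<mu> \<Phi> t \<le> a" .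
qed

lemma wnorm_diff3_tendsto_zero:
  assumes \<mu>: "0 < \<mu>"
    and bound: "\<And>n t. norm (profile_vec (v n) t) \<le> B" "\<And>t. norm (profile_vec \<Psi> t) \<le> B"
    and unif: "\<And>R. uniform_limit {-R..R} (\<lambda>n. profile_vec (v n)) (profile_vec \<Psi>) sequentially"
  shows "(\<lambda>n. wnorm \<mu> (diff3 (v n) \<Psi>)) \<longlonglongrightarrow> 0"
proof (rule order_tendstoI)
  have diff: "norm (profile_vec (diff3 (v n) \<Psi>) t) \<le> 2 * B" for n t
    unfolding profile_vec_diff3
    using norm_triangle_ineq4[of "profile_vec (v n) t" "profile_vec \<Psi> t"] bound(1)[of n t] bound(2)[of t]
    by linarith
  then have comps: "\<bar>comp i (diff3 (v n) \<Psi>) t\<bar> \<le> 2 * B" if "i \<in> {1,2,3}" for i n t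
    using abs_comp_le_norm_profile_vec[OF that] order_trans by blast
  fix a :: real
  show "a < 0 \<Longrightarrow> \<forall>\<^sub>F n in sequentially. a < wnorm \<mu> (diff3 (v n) \<Psi>)"
    using wnorm_nonneg[OF less_imp_le[OF \<mu>] comps] by (intro always_eventually allI) (meson less_le_trans)
  assume a: "0 < a"
  obtain R where R: "2 * B * exp (- \<mu> * R) < a / 2"
    using exists_exp_tail_small[of \<mu> "a / 2" "2 * B"] \<mu> a by auto
  have "\<forall>\<^sub>F n in sequentially. \<forall>t\<in>{-R..R}. dist (profile_vec (v n) t) (profile_vec \<Psi> t) < a / 2"
    by (rule uniform_limitD[OF unif]) (use a in simp)
  then show "\<forall>\<^sub>F n in sequentially. wnorm \<mu> (diff3 (v n) \<Psi>) < a"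
  proof eventually_elim
    case (elim n)
    have "wnorm \<mu> (diff3 (v n) \<Psi>) \<le> a / 2"
      using \<mu> diff R elim
      by (intro wnorm_le_of_small_on_interval[where B = "2 * B" and R = R])
         (auto simp: profile_vec_diff3 dist_norm less_imp_le)
    then show ?case using a by linarith
  qed
qed

section \<open>Locally uniform limits on the real line\<close>

lemma Arzela_Ascoli_uniform_limit:
  fixes u :: "nat \<Rightarrow> 'a::euclidean_space \<Rightarrow> 'b::{real_normed_vector,heine_borel}"
  assumes "compact S" and "\<And>n x. x \<in> S \<Longrightarrow> norm (u n x) \<le> B"
    and equi: "\<And>e. 0 < e \<Longrightarrow> \<exists>d>0. \<forall>n x y. norm (x - y) < d \<longrightarrow> norm (u n x - u n y) < e"
  obtains k g where "strict_mono (k :: nat \<Rightarrow> nat)" "uniform_limit S (u \<circ> k) g sequentially"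
proof -
  have "\<exists>d. 0 < d \<and> (\<forall>n y. y \<in> S \<and> norm (x - y) < d \<longrightarrow> norm (u n x - u n y) < e)"
    if "x \<in> S" "0 < e" for x e
    using equi[OF that(2)] by blast
  then obtain g k where "continuous_on S g" and k: "strict_mono (k :: nat \<Rightarrow> nat)"
    and conv: "\<And>e. 0 < e \<Longrightarrow> \<exists>N. \<forall>n x. n \<ge> N \<and> x \<in> S \<longrightarrow> norm (u (k n) x - g x) < e"
    using Arzela_Ascoli[of S u B, OF assms(1,2)] by blast
  have "uniform_limit S (u \<circ> k) g sequentially"
  proof (rule uniform_limitI)
    fix e :: real assume "0 < e"
    then obtain N where "\<forall>n x. n \<ge> N \<and> x \<in> S \<longrightarrow> norm (u (k n) x - g x) < e"
      using conv by blast
    then show "\<forall>\<^sub>F n in sequentially. \<forall>x\<in>S. dist ((u \<circ> k) n x) (g x) < e"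
      unfolding eventually_sequentially dist_norm by auto
  qed
  with k show ?thesis by (rule that)
qed

lemma diagonal_subseq_uniform_limits:
  fixes u :: "nat \<Rightarrow> real \<Rightarrow> 'a::{real_normed_vector,heine_borel}"
  assumes bound: "\<And>n t. norm (u n t) \<le> B"
    and equi: "\<And>e. 0 < e \<Longrightarrow> \<exists>d>0. \<forall>n t t'. \<bar>t - t'\<bar> < d \<longrightarrow> norm (u n t - u n t') < e"
  obtains k :: "nat \<Rightarrow> nat" where "strict_mono k"
    "\<forall>i. \<exists>g. uniform_limit {-real i..real i} (u \<circ> k) g sequentially"
proof -
  define P where "P i r \<longleftrightarrow> (\<exists>g. uniform_limit {-real i..real i} (u \<circ> r) g sequentially)"
    for i :: nat and r :: "nat \<Rightarrow> nat"
  obtain k :: "nat \<Rightarrow> nat" where "strict_mono k" "\<And>i. P i (id \<circ> k)"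
  proof (rule subsequence_diagonalization_lemma[of P id])
    fix i :: nat and r :: "nat \<Rightarrow> nat"
    obtain k g where "strict_mono (k :: nat \<Rightarrow> nat)" "uniform_limit {-real i..real i} (u \<circ> r \<circ> k) g sequentially"
    proof (rule Arzela_Ascoli_uniform_limit[of "{-real i..real i}" "u \<circ> r" B])
      show "\<exists>d>0. \<forall>n x y. norm (x - y) < d \<longrightarrow> norm ((u \<circ> r) n x - (u \<circ> r) n y) < e" if "0 < e" for e
        using equi[OF that] by (simp only: o_def real_norm_def) blast
    qed (use bound in auto)
    then show "\<exists>k. strict_mono k \<and> P i (r \<circ> k)"
      unfolding P_def by (auto simp: o_assoc)
  next
    fix i :: nat and r k1 k2 :: "nat \<Rightarrow> nat" and N :: nat
    assume "P i (r \<circ> k1)" and sub: "\<And>j. N \<le> j \<Longrightarrow> \<exists>j'. j \<le> j' \<and> k2 j = k1 j'"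
    then obtain g where g: "uniform_limit {-real i..real i} (u \<circ> (r \<circ> k1)) g sequentially"
      unfolding P_def by blast
    have "uniform_limit {-real i..real i} (u \<circ> (r \<circ> k2)) g sequentially"
    proof (rule uniform_limitI)
      fix e :: real assume "0 < e"
      then obtain N1 where N1: "\<And>n. N1 \<le> n \<Longrightarrow> \<forall>x\<in>{-real i..real i}. dist (u (r (k1 n)) x) (g x) < e"
        using uniform_limitD[OF g] by (auto simp: eventually_sequentially)
      have "\<forall>x\<in>{-real i..real i}. dist (u (r (k2 n)) x) (g x) < e" if "max N N1 \<le> n" for n
      proof -
        have "N \<le> n" using that by simp
        then obtain j' where "n \<le> j'" "k2 n = k1 j'"
          using sub by blast
        then show ?thesis using N1[of j'] that by auto
      qed
      then show "\<forall>\<^sub>F n in sequentially. \<forall>x\<in>{-real i..real i}. dist ((u \<circ> (r \<circ> k2)) n x) (g x) < e"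
        unfolding eventually_sequentially by (auto intro!: exI[of _ "max N N1"])
    qed
    then show "P i (r \<circ> k2)"
      unfolding P_def by blast
  qed blast
  then show ?thesis
    using that unfolding P_def by simp
qed

lemma continuous_on_limit_equicontinuous:
  fixes u :: "nat \<Rightarrow> real \<Rightarrow> 'a::real_normed_vector"
  assumes lim: "\<And>t. (\<lambda>n. u n t) \<longlonglongrightarrow> g t"
    and equi: "\<And>e. 0 < e \<Longrightarrow> \<exists>d>0. \<forall>n t t'. \<bar>t - t'\<bar> < d \<longrightarrow> norm (u n t - u n t') < e"
  shows "continuous_on UNIV g"
  unfolding continuous_on_iff
proof (intro ballI allI impI)
  fix x e :: real assume "0 < e"
  then obtain d where d: "0 < d" "\<forall>n t t'. \<bar>t - t'\<bar> < d \<longrightarrow> norm (u n t - u n t') < e / 2"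
    using equi[of "e / 2"] by auto
  have "dist (g x') (g x) < e" if "dist x' x < d" for x'
  proof -
    have "norm (u n x' - u n x) \<le> e / 2" for n
      using d(2) that by (simp add: dist_real_def less_imp_le)
    then have "norm (g x' - g x) \<le> e / 2"
      by (intro LIMSEQ_le_const2[OF tendsto_norm[OF tendsto_diff[OF lim lim]]]) auto
    then show ?thesis using \<open>0 < e\<close> by (simp add: dist_norm)
  qed
  then show "\<exists>d>0. \<forall>x'\<in>UNIV. dist x' x < d \<longrightarrow> dist (g x') (g x) < e"
    using d(1) by blast
qed

lemma Arzela_Ascoli_real_line:
  fixes u :: "nat \<Rightarrow> real \<Rightarrow> 'a::{real_normed_vector,heine_borel}"
  assumes bound: "\<And>n t. norm (u n t) \<le> B"
    and equi: "\<And>e. 0 < e \<Longrightarrow> \<exists>d>0. \<forall>n t t'. \<bar>t - t'\<bar> < d \<longrightarrow> norm (u n t - u n t') < e"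
  obtains s g where "strict_mono s" "continuous_on UNIV g" "\<And>t. norm (g t) \<le> B"
    "\<And>R. uniform_limit {-R..R} (u \<circ> s) g sequentially"
proof -
  obtain k :: "nat \<Rightarrow> nat" where k: "strict_mono k"
    and Pk: "\<forall>i. \<exists>g. uniform_limit {-real i..real i} (u \<circ> k) g sequentially"
    by (rule diagonal_subseq_uniform_limits[OF bound equi])
  define g where "g t = lim (\<lambda>n. u (k n) t)" for t
  have unif: "uniform_limit {-real i..real i} (u \<circ> k) g sequentially" for i
  proof -
    obtain gi where gi: "uniform_limit {-real i..real i} (u \<circ> k) gi sequentially"
      using Pk by blast
    have "gi t = g t" if "t \<in> {-real i..real i}" for t
      using tendsto_uniform_limitI[OF gi that] unfolding g_def by (simp add: limI)
    then show ?thesis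
      using gi uniform_limit_cong'[of "{-real i..real i}" "u \<circ> k" "u \<circ> k" gi g] by simp
  qed
  have lim: "(\<lambda>n. u (k n) t) \<longlonglongrightarrow> g t" for t
  proof -
    have "t \<in> {-real (nat \<lceil>\<bar>t\<bar>\<rceil>)..real (nat \<lceil>\<bar>t\<bar>\<rceil>)}"
      by (auto simp: abs_le_iff) linarith+
    from tendsto_uniform_limitI[OF unif this] show ?thesis by simp
  qed
  show ?thesis
  proof (rule that[OF k])
    show "continuous_on UNIV g"
    proof (rule continuous_on_limit_equicontinuous[OF lim])
      fix e :: real assume "0 < e"
      then obtain d where "0 < d" "\<forall>n t t'. \<bar>t - t'\<bar> < d \<longrightarrow> norm (u n t - u n t') < e"
        using equi by blast
      then show "\<exists>d>0. \<forall>n t t'. \<bar>t - t'\<bar> < d \<longrightarrow> norm (u (k n) t - u (k n) t') < e"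
        by blast
    qed
    show "norm (g t) \<le> B" for t
      by (rule LIMSEQ_le_const2[OF tendsto_norm[OF lim]]) (use bound in auto)
    show "uniform_limit {-R..R} (u \<circ> k) g sequentially" for R
      by (rule uniform_limit_on_subset[OF unif[of "nat \<lceil>\<bar>R\<bar>\<rceil>"]]) auto
  qed
qed

section \<open>The operators H and F\<close>

lemma PQM_D:
  assumes "PQM \<sigma> M f \<beta>" "admissible \<sigma> M X" "admissible \<sigma> M Y" "leX3 \<sigma> Y X"
  shows "f 1 X - f 1 Y + \<beta> 1 * (fst X 0 - fst Y 0) \<ge> 0"
    "f 2 X - f 2 (fst X, fst (snd Y), snd (snd X)) + \<beta> 2 * (fst (snd X) 0 - fst (snd Y) 0) \<ge> 0"
    "f 2 X \<le> f 2 (fst Y, fst (snd X), snd (snd X))"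
    "f 2 X \<le> f 2 (fst X, fst (snd X), snd (snd Y))"
    "f 3 X - f 3 Y + \<beta> 3 * (snd (snd X) 0 - snd (snd Y) 0) \<ge> 0"
  using assms unfolding PQM_def by (cases X, cases Y, fastforce)+

lemma C2b_continuous: "C2b x \<Longrightarrow> continuous_on UNIV x"
  unfolding C2b_def by (auto intro!: continuous_at_imp_continuous_on differentiable_imp_continuous_within)

lemma C2b_deriv_continuous: "C2b x \<Longrightarrow> continuous_on UNIV (deriv x)"
  unfolding C2b_def by (auto intro!: continuous_at_imp_continuous_on differentiable_imp_continuous_within)

lemma bounded_range_iff_abs_le: "bounded (range h) \<longleftrightarrow> (\<exists>B. \<forall>t. \<bar>h t :: real\<bar> \<le> B)"
  unfolding bounded_iff by auto

locale wave_operator =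
  fixes \<sigma> c :: real and D r k M L \<beta> K \<delta> :: "nat \<Rightarrow> real"
    and f :: "nat \<Rightarrow> tri \<Rightarrow> real" and G :: "nat \<Rightarrow> real \<Rightarrow> real"
  assumes sigma_pos: "0 < \<sigma>"
    and M_nonneg: "\<And>i. i \<in> {1,2,3} \<Longrightarrow> 0 \<le> M i"
    and C1: "C1 \<sigma> k f" and C2: "C2 \<sigma> M f L" and PQM: "PQM \<sigma> M f \<beta>"
    and Gcond: "Gcond D c r \<beta> G K \<delta>"
begin

abbreviation Mmax :: real where "Mmax \<equiv> max (M 1) (max (M 2) (M 3))"

lemma kernel: "i \<in> {1,2,3} \<Longrightarrow> decaying_kernel (G i) (K i) (\<delta> i)"
  using Gcond unfolding Gcond_def decaying_kernel_def by blast

lemma L_pos: "i \<in> {1,2,3} \<Longrightarrow> 0 < L i"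
  using C2 by (auto simp: C2_def)

lemma beta_pos: "i \<in> {1,2,3} \<Longrightarrow> 0 < \<beta> i"
  using PQM by (auto simp: PQM_def)

lemma f_lipschitz:
  "i \<in> {1,2,3} \<Longrightarrow> admissible \<sigma> M P \<Longrightarrow> admissible \<sigma> M Q \<Longrightarrow>
    \<bar>f i P - f i Q\<bar> \<le> L i * xnorm3 \<sigma> (diff3 P Q)"
  using C2 unfolding C2_def by blast

lemma abs_comp_le_Mmax:
  assumes "admissible_profile M \<Phi>" "i \<in> {1,2,3}"
  shows "\<bar>comp i \<Phi> t\<bar> \<le> Mmax"
proof -
  have "M i \<le> Mmax" using assms(2) by auto
  then show ?thesis using admissible_profileD(2,3)[OF assms, of t] by simp
qed

lemma abs_f_seg3_le:
  assumes \<Phi>: "admissible_profile M \<Phi>" and i: "i \<in> {1,2,3}"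
  shows "\<bar>f i (seg3 \<sigma> \<Phi> s)\<bar> \<le> L i * Mmax"
proof -
  let ?O = "(\<lambda>_. 0, \<lambda>_. 0, \<lambda>_. 0) :: tri"
  have zero: "(hat \<sigma> 0, hat \<sigma> 0, hat \<sigma> 0) = seg3 \<sigma> ?O s"
    by (auto simp: seg3_def seg_def hat_def)
  have "admissible_profile M ?O"
    using M_nonneg by (auto simp: admissible_profile_def comp_def)
  then have "\<bar>f i (seg3 \<sigma> \<Phi> s) - f i (seg3 \<sigma> ?O s)\<bar> \<le> L i * xnorm3 \<sigma> (diff3 (seg3 \<sigma> \<Phi> s) (seg3 \<sigma> ?O s))"
    by (intro f_lipschitz i admissible_seg3 \<Phi>)
  moreover have "f i (seg3 \<sigma> ?O s) = 0"
    using C1 i zero by (auto simp: C1_def)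
  moreover have "comp j ?O x = 0" for j x by (simp add: comp_def)
  then have "xnorm3 \<sigma> (diff3 (seg3 \<sigma> \<Phi> s) (seg3 \<sigma> ?O s)) \<le> Mmax"
    using sigma_pos abs_comp_le_Mmax[OF \<Phi>] by (intro xnorm3_diff_seg3_le) auto
  then have "L i * xnorm3 \<sigma> (diff3 (seg3 \<sigma> \<Phi> s) (seg3 \<sigma> ?O s)) \<le> L i * Mmax"
    using L_pos[OF i] by (simp add: mult_left_mono)
  ultimately show ?thesis by linarith
qed

lemma f_seg3_continuous:
  assumes \<Phi>: "admissible_profile M \<Phi>" and i: "i \<in> {1,2,3}"
  shows "continuous_on UNIV (\<lambda>s. f i (seg3 \<sigma> \<Phi> s))"
  unfolding continuous_on_iff
proof (intro ballI allI impI)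
  fix p e :: real assume e: "0 < e"
  let ?e = "e / (2 * L i)"
  have "continuous_on UNIV (profile_vec \<Phi>)"
    using admissible_profileD(1)[OF \<Phi>] by (rule continuous_on_profile_vec)
  then obtain d where d: "0 < d"
    and close: "\<And>s \<theta>. \<bar>s - p\<bar> < d \<Longrightarrow> \<theta> \<in> {-\<sigma>..0} \<Longrightarrow> dist (profile_vec \<Phi> (s + \<theta>)) (profile_vec \<Phi> (p + \<theta>)) < ?e"
    using seg_shift_close[of "profile_vec \<Phi>" ?e p \<sigma>] e L_pos[OF i] by auto
  show "\<exists>d>0. \<forall>s\<in>UNIV. dist s p < d \<longrightarrow> dist (f i (seg3 \<sigma> \<Phi> s)) (f i (seg3 \<sigma> \<Phi> p)) < e"
  proof (intro exI[of _ d] conjI ballI impI d)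
    fix s assume "dist s p < d"
    then have sp: "\<bar>s - p\<bar> < d" by (simp add: dist_real_def)
    have "xnorm3 \<sigma> (diff3 (seg3 \<sigma> \<Phi> s) (seg3 \<sigma> \<Phi> p)) \<le> ?e"
    proof (rule xnorm3_diff_seg3_le)
      fix j :: nat and \<theta> :: real assume "j \<in> {1,2,3}" "\<theta> \<in> {-\<sigma>..0}"
      then show "\<bar>comp j \<Phi> (s + \<theta>) - comp j \<Phi> (p + \<theta>)\<bar> \<le> ?e"
        using abs_comp_diff_le_dist close[OF sp] by (meson less_imp_le order_trans)
    qed (use sigma_pos in simp)
    then have "L i * xnorm3 \<sigma> (diff3 (seg3 \<sigma> \<Phi> s) (seg3 \<sigma> \<Phi> p)) \<le> L i * ?e"
      by (rule mult_left_mono) (use L_pos[OF i] in simp)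
    then have "\<bar>f i (seg3 \<sigma> \<Phi> s) - f i (seg3 \<sigma> \<Phi> p)\<bar> \<le> L i * ?e"
      using f_lipschitz[OF i admissible_seg3[OF \<Phi>] admissible_seg3[OF \<Phi>], of s p] by linarith
    also have "\<dots> < e" using e L_pos[OF i] by simp
    finally show "dist (f i (seg3 \<sigma> \<Phi> s)) (f i (seg3 \<sigma> \<Phi> p)) < e"
      by (simp add: dist_real_def)
  qed
qed

lemma H_continuous:
  assumes \<Phi>: "admissible_profile M \<Phi>" and i: "i \<in> {1,2,3}"
  shows "continuous_on UNIV (H \<sigma> f \<beta> r i \<Phi>)"
proof -
  have "continuous_on UNIV (\<lambda>t. f i (seg3 \<sigma> \<Phi> (t + r i)))"
    by (rule continuous_on_compose2[OF f_seg3_continuous[OF \<Phi> i]]) (auto intro!: continuous_intros)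
  moreover have "continuous_on UNIV (\<lambda>t. comp i \<Phi> (t + r i))"
    by (rule continuous_on_compose2[OF admissible_profileD(1)[OF \<Phi> i]]) (auto intro!: continuous_intros)
  ultimately have "continuous_on UNIV (\<lambda>t. f i (seg3 \<sigma> \<Phi> (t + r i)) + \<beta> i * comp i \<Phi> (t + r i))"
    by (intro continuous_on_add continuous_on_mult_left)
  then show ?thesis
    by (simp add: H_def[abs_def])
qed

lemma abs_H_le:
  assumes \<Phi>: "admissible_profile M \<Phi>" and i: "i \<in> {1,2,3}"
  shows "\<bar>H \<sigma> f \<beta> r i \<Phi> t\<bar> \<le> (L i + \<beta> i) * Mmax"
proof -
  have "\<bar>\<beta> i * comp i \<Phi> (t + r i)\<bar> \<le> \<beta> i * Mmax"
    using abs_comp_le_Mmax[OF \<Phi> i] beta_pos[OF i] by (simp add: abs_mult mult_left_mono)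
  moreover have "\<bar>H \<sigma> f \<beta> r i \<Phi> t\<bar> \<le> \<bar>f i (seg3 \<sigma> \<Phi> (t + r i))\<bar> + \<bar>\<beta> i * comp i \<Phi> (t + r i)\<bar>"
    unfolding H_def by (rule abs_triangle_ineq)
  ultimately show ?thesis
    using abs_f_seg3_le[OF \<Phi> i, of "t + r i"] by (simp add: distrib_right)
qed

lemma H_mono:
  assumes P: "admissible_profile M P" and Q: "admissible_profile M Q" and QP: "profile_le Q P"
    and i: "i \<in> {1,3}"
  shows "H \<sigma> f \<beta> r i Q t \<le> H \<sigma> f \<beta> r i P t"
proof -
  note pqm = PQM_D[OF PQM admissible_seg3[OF P] admissible_seg3[OF Q] leX3_seg3[OF QP], of "t + r i"]
  have at_0: "seg \<sigma> \<phi> s 0 = \<phi> s" for \<phi> s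
    using sigma_pos by (simp add: seg_at_0)
  from i consider "i = 1" | "i = 3" by blast
  then show ?thesis
  proof cases
    case 1
    then show ?thesis using pqm(1) by (simp add: H_def seg3_def at_0 algebra_simps)
  next
    case 2
    then show ?thesis using pqm(5) by (simp add: H_def seg3_def at_0 algebra_simps)
  qed
qed

text \<open>(P2) raises the middle component; (P3) and (P4) then lower the outer ones.\<close>
lemma H2_mono:
  assumes P: "admissible_profile M P" and Q: "admissible_profile M Q"
    and "\<And>t. fst Q t \<le> fst P t" "\<And>t. fst (snd P) t \<le> fst (snd Q) t" "\<And>t. snd (snd Q) t \<le> snd (snd P) t"
  shows "H \<sigma> f \<beta> r 2 P t \<le> H \<sigma> f \<beta> r 2 Q t"
proof -
  let ?s = "t + r 2"
  define R1 where "R1 = (fst P, fst (snd Q), snd (snd P))"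
  define R2 where "R2 = (fst Q, fst (snd Q), snd (snd P))"
  have R1: "admissible_profile M R1" and R2: "admissible_profile M R2"
    unfolding R1_def R2_def by (intro admissible_profile_mix P Q)+
  have "profile_le P R1" "profile_le R2 R1" "profile_le Q R2"
    using assms(3-5) by (auto simp: profile_le_def R1_def R2_def comp_def)
  note le = leX3_seg3[OF this(1)] leX3_seg3[OF this(2)] leX3_seg3[OF this(3)]
  have "f 2 (seg3 \<sigma> P ?s) + \<beta> 2 * fst (snd P) ?s \<le> f 2 (seg3 \<sigma> R1 ?s) + \<beta> 2 * fst (snd Q) ?s"
    using PQM_D(2)[OF PQM admissible_seg3[OF R1] admissible_seg3[OF P] le(1), of ?s] sigma_pos
    by (simp add: seg3_def seg_at_0 R1_def algebra_simps)
  moreover have "f 2 (seg3 \<sigma> R1 ?s) \<le> f 2 (seg3 \<sigma> R2 ?s)"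
    using PQM_D(3)[OF PQM admissible_seg3[OF R1] admissible_seg3[OF R2] le(2), of ?s]
    by (simp add: seg3_def R1_def R2_def)
  moreover have "f 2 (seg3 \<sigma> R2 ?s) \<le> f 2 (seg3 \<sigma> Q ?s)"
    using PQM_D(4)[OF PQM admissible_seg3[OF R2] admissible_seg3[OF Q] le(3), of ?s]
    by (simp add: seg3_def R2_def)
  ultimately show ?thesis
    unfolding H_def by simp
qed

lemma conv_is_sol:
  "i \<in> {1,2,3} \<Longrightarrow> continuous_on UNIV h \<Longrightarrow> bounded (range h) \<Longrightarrow>
    is_sol (D i) c (r i) (\<beta> i) h (conv (G i) h)"
  using Gcond unfolding Gcond_def by blast

lemma bounded_sol_eq_conv:
  "i \<in> {1,2,3} \<Longrightarrow> continuous_on UNIV h \<Longrightarrow> bounded (range h) \<Longrightarrow> bounded (range y) \<Longrightarrow>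
    is_sol (D i) c (r i) (\<beta> i) h y \<Longrightarrow> y = conv (G i) h"
  using Gcond unfolding Gcond_def by blast

lemma conv_continuous:
  assumes "i \<in> {1,2,3}" "continuous_on UNIV h" "bounded (range h)"
  shows "continuous_on UNIV (conv (G i) h)"
  using conv_is_sol[OF assms] unfolding is_sol_def
  by (auto intro!: continuous_at_imp_continuous_on differentiable_imp_continuous_within)

lemma F_continuous:
  assumes "admissible_profile M \<Phi>" "i \<in> {1,2,3}"
  shows "continuous_on UNIV (Fop \<sigma> f \<beta> r G i \<Phi>)"
  unfolding Fop_def using abs_H_le[OF assms]
  by (intro conv_continuous assms H_continuous) (auto simp: bounded_range_iff_abs_le)

lemma F_mono:
  assumes P: "admissible_profile M P" and Q: "admissible_profile M Q" and i: "i \<in> {1,2,3}"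
    and le: "\<And>s. H \<sigma> f \<beta> r i P s \<le> H \<sigma> f \<beta> r i Q s"
  shows "Fop \<sigma> f \<beta> r G i P t \<le> Fop \<sigma> f \<beta> r G i Q t"
  unfolding Fop_def
  by (rule conv_mono[OF kernel[OF i] H_continuous[OF P i] abs_H_le[OF P i]
        H_continuous[OF Q i] abs_H_le[OF Q i] le])

text \<open>The source term for which a C2 profile x solves the linear equation of (G) exactly.\<close>
definition source :: "nat \<Rightarrow> (real \<Rightarrow> real) \<Rightarrow> real \<Rightarrow> real" where
  "source i x t = \<beta> i * x (t + r i) - D i * deriv (deriv x) t + c * deriv x (t + r i)"

lemma source_continuous:
  assumes "C2b x"
  shows "continuous_on UNIV (source i x)"
proof -
  have "continuous_on UNIV (deriv (deriv x))"
    using assms by (simp add: C2b_def)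
  then show ?thesis
    unfolding source_def[abs_def]
    by (intro continuous_intros continuous_on_compose2[OF C2b_continuous[OF assms]]
        continuous_on_compose2[OF C2b_deriv_continuous[OF assms]]) auto
qed

lemma source_bounded:
  assumes "C2b x"
  shows "bounded (range (source i x))"
proof -
  obtain B0 B1 B2 where "\<And>t. \<bar>x t\<bar> \<le> B0" "\<And>t. \<bar>deriv x t\<bar> \<le> B1" "\<And>t. \<bar>deriv (deriv x) t\<bar> \<le> B2"
    using assms unfolding C2b_def bounded_range_iff_abs_le by metis
  then have "\<bar>source i x t\<bar> \<le> \<bar>\<beta> i\<bar> * B0 + \<bar>D i\<bar> * B2 + \<bar>c\<bar> * B1" for t
    unfolding source_def
    by (intro order_trans[OF abs_triangle_ineq] order_trans[OF abs_triangle_ineq4] add_mono)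
       (auto simp: abs_mult intro: mult_left_mono order_trans[OF abs_triangle_ineq4])
  then show ?thesis
    unfolding bounded_range_iff_abs_le by blast
qed

lemma C2b_eq_conv_source:
  assumes "i \<in> {1,2,3}" "C2b x"
  shows "x = conv (G i) (source i x)"
  using assms
  by (intro bounded_sol_eq_conv source_continuous source_bounded)
     (auto simp: C2b_def is_sol_def source_def)

lemma H_minus_source:
  "comp i \<Psi> = x \<Longrightarrow> H \<sigma> f \<beta> r i \<Psi> t - source i x t = Wop \<sigma> D c r f i x \<Psi> t"
  by (simp add: H_def source_def Wop_def)

lemma F_le_upper:
  assumes i: "i \<in> {1,2,3}" and x: "C2b x" and \<Psi>: "admissible_profile M \<Psi>" "comp i \<Psi> = x"
    and W: "\<And>t. Wop \<sigma> D c r f i x \<Psi> t \<le> 0"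
  shows "Fop \<sigma> f \<beta> r G i \<Psi> t \<le> x t"
proof -
  obtain B where B: "\<And>t. \<bar>source i x t\<bar> \<le> B"
    using source_bounded[OF x] unfolding bounded_range_iff_abs_le by blast
  have "Fop \<sigma> f \<beta> r G i \<Psi> t \<le> conv (G i) (source i x) t"
    unfolding Fop_def using H_minus_source[OF \<Psi>(2)] W
    by (intro conv_mono[OF kernel[OF i] H_continuous[OF \<Psi>(1) i] abs_H_le[OF \<Psi>(1) i]
          source_continuous[OF x] B]) (simp add: algebra_simps)
  also have "\<dots> = x t"
    using C2b_eq_conv_source[OF i x] by simp
  finally show ?thesis .
qed

lemma lower_le_F:
  assumes i: "i \<in> {1,2,3}" and x: "C2b x" and \<Psi>: "admissible_profile M \<Psi>" "comp i \<Psi> = x"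
    and W: "\<And>t. 0 \<le> Wop \<sigma> D c r f i x \<Psi> t"
  shows "x t \<le> Fop \<sigma> f \<beta> r G i \<Psi> t"
proof -
  obtain B where B: "\<And>t. \<bar>source i x t\<bar> \<le> B"
    using source_bounded[OF x] unfolding bounded_range_iff_abs_le by blast
  have "x t = conv (G i) (source i x) t"
    using C2b_eq_conv_source[OF i x] by simp
  also have "\<dots> \<le> Fop \<sigma> f \<beta> r G i \<Psi> t"
    unfolding Fop_def using H_minus_source[OF \<Psi>(2)] W
    by (intro conv_mono[OF kernel[OF i] source_continuous[OF x] B
          H_continuous[OF \<Psi>(1) i] abs_H_le[OF \<Psi>(1) i]]) (simp add: algebra_simps)
  finally show ?thesis .
qed

lemma F_equicontinuous:
  assumes i: "i \<in> {1,2,3}" and e: "0 < e"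
  obtains \<eta> where "0 < \<eta>"
    and "\<And>\<Phi> t t'. admissible_profile M \<Phi> \<Longrightarrow> \<bar>t - t'\<bar> < \<eta> \<Longrightarrow>
           \<bar>Fop \<sigma> f \<beta> r G i \<Phi> t - Fop \<sigma> f \<beta> r G i \<Phi> t'\<bar> \<le> e"
proof -
  obtain \<eta> where "0 < \<eta>"
    and "\<And>h t t'. continuous_on UNIV h \<Longrightarrow> (\<And>s. \<bar>h s\<bar> \<le> (L i + \<beta> i) * Mmax) \<Longrightarrow> \<bar>t - t'\<bar> < \<eta> \<Longrightarrow>
           \<bar>conv (G i) h t - conv (G i) h t'\<bar> \<le> e"
    using conv_equicontinuous[OF kernel[OF i] e] by blast
  then show ?thesis
    using that H_continuous[OF _ i] abs_H_le[OF _ i] unfolding Fop_def by blast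
qed

lemma norm_profile_vec_le_Mmax:
  assumes "admissible_profile M \<Phi>"
  shows "norm (profile_vec \<Phi> t) \<le> 3 * Mmax"
proof -
  have "norm (profile_vec \<Phi> t) \<le> \<bar>comp 1 \<Phi> t\<bar> + \<bar>comp 2 \<Phi> t\<bar> + \<bar>comp 3 \<Phi> t\<bar>"
    using norm_triple_le[of "profile_vec \<Phi> t"] by (simp add: profile_vec_def)
  then show ?thesis
    using abs_comp_le_Mmax[OF assms, of 1 t] abs_comp_le_Mmax[OF assms, of 2 t]
      abs_comp_le_Mmax[OF assms, of 3 t] by simp
qed

lemma F3_equicontinuous:
  assumes e: "0 < e"
  shows "\<exists>d>0. \<forall>\<Phi> t t'. admissible_profile M \<Phi> \<longrightarrow> \<bar>t - t'\<bar> < d \<longrightarrow>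
           norm (profile_vec (F3 \<sigma> f \<beta> r G \<Phi>) t - profile_vec (F3 \<sigma> f \<beta> r G \<Phi>) t') < e"
proof -
  have "0 < e / 4" using e by simp
  then obtain \<eta>1 \<eta>2 \<eta>3 where "0 < \<eta>1" "0 < \<eta>2" "0 < \<eta>3" and close:
    "\<And>\<Phi> t t'. admissible_profile M \<Phi> \<Longrightarrow> \<bar>t - t'\<bar> < \<eta>1 \<Longrightarrow> \<bar>Fop \<sigma> f \<beta> r G 1 \<Phi> t - Fop \<sigma> f \<beta> r G 1 \<Phi> t'\<bar> \<le> e / 4"
    "\<And>\<Phi> t t'. admissible_profile M \<Phi> \<Longrightarrow> \<bar>t - t'\<bar> < \<eta>2 \<Longrightarrow> \<bar>Fop \<sigma> f \<beta> r G 2 \<Phi> t - Fop \<sigma> f \<beta> r G 2 \<Phi> t'\<bar> \<le> e / 4"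
    "\<And>\<Phi> t t'. admissible_profile M \<Phi> \<Longrightarrow> \<bar>t - t'\<bar> < \<eta>3 \<Longrightarrow> \<bar>Fop \<sigma> f \<beta> r G 3 \<Phi> t - Fop \<sigma> f \<beta> r G 3 \<Phi> t'\<bar> \<le> e / 4"
    using F_equicontinuous[of 1 "e / 4"] F_equicontinuous[of 2 "e / 4"] F_equicontinuous[of 3 "e / 4"]
    by (metis insertCI)
  have "norm (profile_vec (F3 \<sigma> f \<beta> r G \<Phi>) t - profile_vec (F3 \<sigma> f \<beta> r G \<Phi>) t') < e"
    if \<Phi>: "admissible_profile M \<Phi>" and tt: "\<bar>t - t'\<bar> < min \<eta>1 (min \<eta>2 \<eta>3)" for \<Phi> t t'
  proof -
    have "norm (profile_vec (F3 \<sigma> f \<beta> r G \<Phi>) t - profile_vec (F3 \<sigma> f \<beta> r G \<Phi>) t')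
        \<le> \<bar>Fop \<sigma> f \<beta> r G 1 \<Phi> t - Fop \<sigma> f \<beta> r G 1 \<Phi> t'\<bar>
          + \<bar>Fop \<sigma> f \<beta> r G 2 \<Phi> t - Fop \<sigma> f \<beta> r G 2 \<Phi> t'\<bar>
          + \<bar>Fop \<sigma> f \<beta> r G 3 \<Phi> t - Fop \<sigma> f \<beta> r G 3 \<Phi> t'\<bar>"
      using norm_triple_le[of "profile_vec (F3 \<sigma> f \<beta> r G \<Phi>) t - profile_vec (F3 \<sigma> f \<beta> r G \<Phi>) t'"]
      by (simp add: profile_vec_def F3_def)
    also have "\<dots> \<le> e / 4 + e / 4 + e / 4"
      using tt by (intro add_mono close \<Phi>) auto
    also have "\<dots> < e" using e by simp
    finally show ?thesis .
  qed
  then show ?thesis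
    using \<open>0 < \<eta>1\<close> \<open>0 < \<eta>2\<close> \<open>0 < \<eta>3\<close> by (intro exI[of _ "min \<eta>1 (min \<eta>2 \<eta>3)"]) auto
qed

lemma abs_H_diff_le:
  assumes P: "admissible_profile M P" and Q: "admissible_profile M Q" and i: "i \<in> {1,2,3}"
    and \<mu>: "0 \<le> \<mu>"
    and close: "\<And>j u. j \<in> {1,2,3} \<Longrightarrow> \<bar>comp j P u - comp j Q u\<bar> \<le> W * exp (\<mu> * \<bar>u\<bar>)"
  shows "\<bar>H \<sigma> f \<beta> r i P s - H \<sigma> f \<beta> r i Q s\<bar> \<le> (L i + \<beta> i) * W * exp (\<mu> * (\<bar>r i\<bar> + \<sigma>)) * exp (\<mu> * \<bar>s\<bar>)"
proof -
  let ?u = "s + r i"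
  let ?E = "W * exp (\<mu> * (\<bar>s\<bar> + \<bar>r i\<bar> + \<sigma>))"
  have "0 \<le> W * exp (\<mu> * \<bar>0\<bar>)"
    using close[of 1 0] abs_ge_zero order_trans by blast
  then have W: "0 \<le> W" by simp
  have near: "\<bar>comp j P (?u + \<theta>) - comp j Q (?u + \<theta>)\<bar> \<le> ?E" if j: "j \<in> {1,2,3}" and \<theta>: "\<theta> \<in> {-\<sigma>..0}" for j \<theta>
  proof -
    have "\<mu> * \<bar>?u + \<theta>\<bar> \<le> \<mu> * (\<bar>s\<bar> + \<bar>r i\<bar> + \<sigma>)"
      using \<theta> \<mu> by (intro mult_left_mono) auto
    then have "W * exp (\<mu> * \<bar>?u + \<theta>\<bar>) \<le> ?E"
      using W by (simp add: mult_left_mono)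
    then show ?thesis
      using close[OF j, of "?u + \<theta>"] by linarith
  qed
  have "xnorm3 \<sigma> (diff3 (seg3 \<sigma> P ?u) (seg3 \<sigma> Q ?u)) \<le> ?E"
    using sigma_pos near by (intro xnorm3_diff_seg3_le) auto
  then have "L i * xnorm3 \<sigma> (diff3 (seg3 \<sigma> P ?u) (seg3 \<sigma> Q ?u)) \<le> L i * ?E"
    by (rule mult_left_mono) (use L_pos[OF i] in simp)
  then have f: "\<bar>f i (seg3 \<sigma> P ?u) - f i (seg3 \<sigma> Q ?u)\<bar> \<le> L i * ?E"
    using f_lipschitz[OF i admissible_seg3[OF P, of \<sigma> ?u] admissible_seg3[OF Q, of \<sigma> ?u]] by linarith
  have "\<bar>comp i P ?u - comp i Q ?u\<bar> \<le> ?E"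
    using near[OF i, of 0] sigma_pos by simp
  then have lin: "\<bar>\<beta> i * comp i P ?u - \<beta> i * comp i Q ?u\<bar> \<le> \<beta> i * ?E"
    using beta_pos[OF i] by (simp add: right_diff_distrib[symmetric] abs_mult mult_left_mono)
  have "\<bar>H \<sigma> f \<beta> r i P s - H \<sigma> f \<beta> r i Q s\<bar>
      \<le> \<bar>f i (seg3 \<sigma> P ?u) - f i (seg3 \<sigma> Q ?u)\<bar> + \<bar>\<beta> i * comp i P ?u - \<beta> i * comp i Q ?u\<bar>"
    unfolding H_def by linarith
  also have "\<dots> \<le> (L i + \<beta> i) * ?E"
    using f lin by (simp add: distrib_right)
  also have "\<dots> = (L i + \<beta> i) * W * exp (\<mu> * (\<bar>r i\<bar> + \<sigma>)) * exp (\<mu> * \<bar>s\<bar>)"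
    by (simp add: exp_add[symmetric] algebra_simps)
  finally show ?thesis .
qed

definition F_lip :: "nat \<Rightarrow> real \<Rightarrow> real" where
  "F_lip i \<mu> = (L i + \<beta> i) * exp (\<mu> * (\<bar>r i\<bar> + \<sigma>)) * K i * (2 / (\<delta> i - \<mu>))"

lemma F_lip_nonneg:
  assumes "i \<in> {1,2,3}" "\<mu> < \<delta> i"
  shows "0 \<le> F_lip i \<mu>"
  unfolding F_lip_def
  using assms L_pos[OF assms(1)] beta_pos[OF assms(1)] decaying_kernelD(5)[OF kernel[OF assms(1)]]
  by (intro mult_nonneg_nonneg) auto

lemma abs_F_diff_le:
  assumes P: "admissible_profile M P" and Q: "admissible_profile M Q" and i: "i \<in> {1,2,3}"
    and \<mu>: "0 \<le> \<mu>" "\<mu> < \<delta> i"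
    and close: "\<And>j u. j \<in> {1,2,3} \<Longrightarrow> \<bar>comp j P u - comp j Q u\<bar> \<le> W * exp (\<mu> * \<bar>u\<bar>)"
  shows "\<bar>Fop \<sigma> f \<beta> r G i P t - Fop \<sigma> f \<beta> r G i Q t\<bar> \<le> W * F_lip i \<mu> * exp (\<mu> * \<bar>t\<bar>)"
proof -
  have "Fop \<sigma> f \<beta> r G i P t - Fop \<sigma> f \<beta> r G i Q t = conv (G i) (\<lambda>s. H \<sigma> f \<beta> r i P s - H \<sigma> f \<beta> r i Q s) t"
    unfolding Fop_def
    by (rule conv_diff[OF kernel[OF i] H_continuous[OF P i] abs_H_le[OF P i] H_continuous[OF Q i] abs_H_le[OF Q i]])
  also have "\<bar>\<dots>\<bar> \<le> (L i + \<beta> i) * W * exp (\<mu> * (\<bar>r i\<bar> + \<sigma>)) * K i * (2 / (\<delta> i - \<mu>)) * exp (\<mu> * \<bar>t\<bar>)"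
    by (rule abs_conv_le[OF kernel[OF i] \<mu> continuous_on_diff[OF H_continuous[OF P i] H_continuous[OF Q i]]
          abs_H_diff_le[OF P Q i \<mu>(1) close]])
  also have "\<dots> = W * F_lip i \<mu> * exp (\<mu> * \<bar>t\<bar>)"
    by (simp add: F_lip_def)
  finally show ?thesis .
qed

end

locale wave_bracket = wave_operator +
  fixes up lo :: tri
  assumes upper_lower: "upper_lower \<sigma> D c r f up lo"
    and ordered: "\<forall>i\<in>{1,2,3}. \<forall>t. 0 \<le> comp i lo t \<and> comp i lo t \<le> comp i up t \<and> comp i up t \<le> M i"
begin

lemma C2b_up_lo: "i \<in> {1,2,3} \<Longrightarrow> C2b (comp i up)" "i \<in> {1,2,3} \<Longrightarrow> C2b (comp i lo)"
  using upper_lower unfolding upper_lower_def by blast+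

lemma admissible_up: "admissible_profile M up"
  and admissible_lo: "admissible_profile M lo"
  using ordered C2b_continuous[OF C2b_up_lo(1)] C2b_continuous[OF C2b_up_lo(2)]
  unfolding admissible_profile_def by (meson order_trans)+

lemma Gamma_admissible:
  assumes "\<Phi> \<in> Gamma lo up"
  shows "admissible_profile M \<Phi>" "profile_le lo \<Phi>" "profile_le \<Phi> up"
proof -
  have \<Phi>: "continuous_on UNIV (comp i \<Phi>) \<and> (\<forall>t. comp i lo t \<le> comp i \<Phi> t \<and> comp i \<Phi> t \<le> comp i up t)"
    if "i \<in> {1,2,3}" for i
    using assms that unfolding Gamma_def by blast
  then show "profile_le lo \<Phi>" "profile_le \<Phi> up"
    unfolding profile_le_def by blast+
  show "admissible_profile M \<Phi>"
    unfolding admissible_profile_def using \<Phi> ordered by (meson order_trans)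
qed

lemma F_bracket_13:
  assumes \<Phi>: "\<Phi> \<in> Gamma lo up" and i: "i \<in> {1,3}"
  shows "comp i lo t \<le> Fop \<sigma> f \<beta> r G i lo t" "Fop \<sigma> f \<beta> r G i lo t \<le> Fop \<sigma> f \<beta> r G i \<Phi> t"
    "Fop \<sigma> f \<beta> r G i \<Phi> t \<le> Fop \<sigma> f \<beta> r G i up t" "Fop \<sigma> f \<beta> r G i up t \<le> comp i up t"
proof -
  have i': "i \<in> {1,2,3}" using i by auto
  note \<Phi>' = Gamma_admissible[OF \<Phi>]
  have W: "\<And>t. Wop \<sigma> D c r f i (comp i up) up t \<le> 0" "\<And>t. 0 \<le> Wop \<sigma> D c r f i (comp i lo) lo t"
    using upper_lower i unfolding upper_lower_def by auto
  show "comp i lo t \<le> Fop \<sigma> f \<beta> r G i lo t"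
    by (rule lower_le_F[OF i' C2b_up_lo(2)[OF i'] admissible_lo refl W(2)])
  show "Fop \<sigma> f \<beta> r G i lo t \<le> Fop \<sigma> f \<beta> r G i \<Phi> t"
    by (intro F_mono admissible_lo \<Phi>' i' H_mono i)
  show "Fop \<sigma> f \<beta> r G i \<Phi> t \<le> Fop \<sigma> f \<beta> r G i up t"
    by (intro F_mono admissible_up \<Phi>' i' H_mono i)
  show "Fop \<sigma> f \<beta> r G i up t \<le> comp i up t"
    by (rule F_le_upper[OF i' C2b_up_lo(1)[OF i'] admissible_up refl W(1)])
qed

lemma F2_bracket:
  assumes \<Phi>: "\<Phi> \<in> Gamma lo up"
  defines "A \<equiv> (fst up, fst (snd lo), snd (snd up))" and "B \<equiv> (fst lo, fst (snd up), snd (snd lo))"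
  shows "fst (snd lo) t \<le> Fop \<sigma> f \<beta> r G 2 A t" "Fop \<sigma> f \<beta> r G 2 A t \<le> Fop \<sigma> f \<beta> r G 2 \<Phi> t"
    "Fop \<sigma> f \<beta> r G 2 \<Phi> t \<le> Fop \<sigma> f \<beta> r G 2 B t" "Fop \<sigma> f \<beta> r G 2 B t \<le> fst (snd up) t"
proof -
  have two: "(2::nat) \<in> {1,2,3}" by simp
  note \<Phi>' = Gamma_admissible[OF \<Phi>]
  have A: "admissible_profile M A" and B: "admissible_profile M B"
    unfolding A_def B_def by (intro admissible_profile_mix admissible_up admissible_lo)+
  have W: "\<And>t. Wop \<sigma> D c r f 2 (fst (snd up)) B t \<le> 0" "\<And>t. 0 \<le> Wop \<sigma> D c r f 2 (fst (snd lo)) A t"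
    using upper_lower unfolding upper_lower_def A_def B_def by auto
  have C: "C2b (fst (snd lo))" "C2b (fst (snd up))"
    using C2b_up_lo[OF two] by simp_all
  note lo_\<Phi> = \<Phi>'(2)[unfolded profile_le_iff] and \<Phi>_up = \<Phi>'(3)[unfolded profile_le_iff]
  show "fst (snd lo) t \<le> Fop \<sigma> f \<beta> r G 2 A t"
    by (rule lower_le_F[OF two C(1) A _ W(2)]) (simp add: A_def)
  show "Fop \<sigma> f \<beta> r G 2 A t \<le> Fop \<sigma> f \<beta> r G 2 \<Phi> t"
    using lo_\<Phi> \<Phi>_up by (intro F_mono A \<Phi>'(1) two H2_mono) (auto simp: A_def)
  show "Fop \<sigma> f \<beta> r G 2 \<Phi> t \<le> Fop \<sigma> f \<beta> r G 2 B t"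
    using lo_\<Phi> \<Phi>_up by (intro F_mono B \<Phi>'(1) two H2_mono) (auto simp: B_def)
  show "Fop \<sigma> f \<beta> r G 2 B t \<le> fst (snd up) t"
    by (rule F_le_upper[OF two C(2) B _ W(1)]) (simp add: B_def)
qed

lemma F_maps_Gamma:
  assumes \<Phi>: "\<Phi> \<in> Gamma lo up"
  shows "F3 \<sigma> f \<beta> r G \<Phi> \<in> Gamma lo up"
  unfolding Gamma_def
proof (intro CollectI ballI conjI allI)
  fix i :: nat and t assume i: "i \<in> {1,2,3}"
  show "continuous_on UNIV (comp i (F3 \<sigma> f \<beta> r G \<Phi>))"
    unfolding comp_F3[OF i] by (rule F_continuous[OF Gamma_admissible(1)[OF \<Phi>] i])
  have "comp i lo t \<le> Fop \<sigma> f \<beta> r G i \<Phi> t \<and> Fop \<sigma> f \<beta> r G i \<Phi> t \<le> comp i up t"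
  proof -
    from i consider "i \<in> {1,3}" | "i = 2" by blast
    then show ?thesis
    proof cases
      case 1
      then show ?thesis using F_bracket_13[OF \<Phi> 1, of t] by linarith
    next
      case 2
      then show ?thesis using F2_bracket[OF \<Phi>, of t] by simp
    qed
  qed
  then show "comp i lo t \<le> comp i (F3 \<sigma> f \<beta> r G \<Phi>) t" "comp i (F3 \<sigma> f \<beta> r G \<Phi>) t \<le> comp i up t"
    unfolding comp_F3[OF i] by auto
qed

lemma F_bracket:
  assumes \<Phi>: "\<Phi> \<in> Gamma lo up"
  shows "fst lo t \<le> Fop \<sigma> f \<beta> r G 1 lo t \<and>
         Fop \<sigma> f \<beta> r G 1 lo t \<le> Fop \<sigma> f \<beta> r G 1 \<Phi> t \<and>
         Fop \<sigma> f \<beta> r G 1 \<Phi> t \<le> Fop \<sigma> f \<beta> r G 1 up t \<and>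
         Fop \<sigma> f \<beta> r G 1 up t \<le> fst up t \<and>
         fst (snd lo) t \<le> Fop \<sigma> f \<beta> r G 2 (fst up, fst (snd lo), snd (snd up)) t \<and>
         Fop \<sigma> f \<beta> r G 2 (fst up, fst (snd lo), snd (snd up)) t \<le> Fop \<sigma> f \<beta> r G 2 \<Phi> t \<and>
         Fop \<sigma> f \<beta> r G 2 \<Phi> t \<le> Fop \<sigma> f \<beta> r G 2 (fst lo, fst (snd up), snd (snd lo)) t \<and>
         Fop \<sigma> f \<beta> r G 2 (fst lo, fst (snd up), snd (snd lo)) t \<le> fst (snd up) t \<and>
         snd (snd lo) t \<le> Fop \<sigma> f \<beta> r G 3 lo t \<and>
         Fop \<sigma> f \<beta> r G 3 lo t \<le> Fop \<sigma> f \<beta> r G 3 \<Phi> t \<and>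
         Fop \<sigma> f \<beta> r G 3 \<Phi> t \<le> Fop \<sigma> f \<beta> r G 3 up t \<and>
         Fop \<sigma> f \<beta> r G 3 up t \<le> snd (snd up) t"
  using F_bracket_13[OF \<Phi>, of 1 t] F_bracket_13[OF \<Phi>, of 3 t] F2_bracket[OF \<Phi>, of t] by simp

lemma abs_comp_diff3_le:
  assumes "\<Phi> \<in> Gamma lo up" "\<Psi> \<in> Gamma lo up" "i \<in> {1,2,3}"
  shows "\<bar>comp i (diff3 \<Psi> \<Phi>) t\<bar> \<le> 2 * Mmax"
  using abs_comp_le_Mmax[OF Gamma_admissible(1)[OF assms(1)] assms(3), of t]
    abs_comp_le_Mmax[OF Gamma_admissible(1)[OF assms(2)] assms(3), of t]
  unfolding comp_diff3 by linarith

lemma F_image_Bmu: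
  assumes "0 \<le> \<mu>"
  shows "F3 \<sigma> f \<beta> r G ` Gamma lo up \<subseteq> Bmu \<mu>"
proof
  fix X assume "X \<in> F3 \<sigma> f \<beta> r G ` Gamma lo up"
  then have X: "admissible_profile M X"
    using F_maps_Gamma Gamma_admissible(1) by blast
  show "X \<in> Bmu \<mu>"
    by (rule in_BmuI[OF assms admissible_profileD(1)[OF X] abs_comp_le_Mmax[OF X]])
qed

lemma wnorm_F_diff_le:
  assumes \<mu>: "0 \<le> \<mu>" "\<mu> < min (\<delta> 1) (min (\<delta> 2) (\<delta> 3))"
    and \<Phi>: "\<Phi> \<in> Gamma lo up" and \<Psi>: "\<Psi> \<in> Gamma lo up"
  shows "wnorm \<mu> (diff3 (F3 \<sigma> f \<beta> r G \<Psi>) (F3 \<sigma> f \<beta> r G \<Phi>))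
           \<le> (F_lip 1 \<mu> + F_lip 2 \<mu> + F_lip 3 \<mu>) * wnorm \<mu> (diff3 \<Psi> \<Phi>)"
proof (rule wnorm_le, rule weighted_abs_leI)
  fix t and i :: nat assume i: "i \<in> {1,2,3}"
  let ?W = "wnorm \<mu> (diff3 \<Psi> \<Phi>)"
  let ?d = "\<bar>Fop \<sigma> f \<beta> r G i \<Psi> t - Fop \<sigma> f \<beta> r G i \<Phi> t\<bar>"
  have \<mu>\<delta>: "\<mu> < \<delta> j" if "j \<in> {1,2,3}" for j
    using \<mu>(2) that by auto
  note bound = abs_comp_diff3_le[OF \<Phi> \<Psi>]
  have W: "0 \<le> ?W"
    by (rule wnorm_nonneg[OF \<mu>(1) bound])
  have "?d \<le> ?W * F_lip i \<mu> * exp (\<mu> * \<bar>t\<bar>)"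
    using abs_comp_le_wnorm[OF \<mu>(1) bound] \<mu>(1)
    by (intro abs_F_diff_le Gamma_admissible(1) \<Psi> \<Phi> i \<mu>\<delta>) (auto simp: comp_diff3)
  then have "exp (- \<mu> * \<bar>t\<bar>) * ?d \<le> exp (- \<mu> * \<bar>t\<bar>) * (?W * F_lip i \<mu> * exp (\<mu> * \<bar>t\<bar>))"
    by (rule mult_left_mono) simp
  also have "\<dots> = F_lip i \<mu> * ?W"
    by (simp add: exp_minus field_simps)
  also have "\<dots> \<le> (F_lip 1 \<mu> + F_lip 2 \<mu> + F_lip 3 \<mu>) * ?W"
    using i W F_lip_nonneg[OF _ \<mu>\<delta>, of 1] F_lip_nonneg[OF _ \<mu>\<delta>, of 2] F_lip_nonneg[OF _ \<mu>\<delta>, of 3]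
    by (intro mult_right_mono) auto
  finally show "exp (- \<mu> * \<bar>t\<bar>) * \<bar>comp i (diff3 (F3 \<sigma> f \<beta> r G \<Psi>) (F3 \<sigma> f \<beta> r G \<Phi>)) t\<bar>
      \<le> (F_lip 1 \<mu> + F_lip 2 \<mu> + F_lip 3 \<mu>) * ?W"
    unfolding comp_diff3 comp_F3[OF i] .
qed

lemma F_continuous_wnorm:
  assumes \<mu>: "0 < \<mu>" "\<mu> < min (\<delta> 1) (min (\<delta> 2) (\<delta> 3))" and \<Phi>: "\<Phi> \<in> Gamma lo up" and e: "0 < e"
  shows "\<exists>\<eta>>0. \<forall>\<Psi>\<in>Gamma lo up. wnorm \<mu> (diff3 \<Psi> \<Phi>) < \<eta> \<longrightarrow>
           wnorm \<mu> (diff3 (F3 \<sigma> f \<beta> r G \<Psi>) (F3 \<sigma> f \<beta> r G \<Phi>)) < e"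
proof -
  define C where "C = F_lip 1 \<mu> + F_lip 2 \<mu> + F_lip 3 \<mu>"
  have "0 \<le> C"
    using \<mu>(2) F_lip_nonneg[of 1 \<mu>] F_lip_nonneg[of 2 \<mu>] F_lip_nonneg[of 3 \<mu>] by (simp add: C_def)
  show ?thesis
  proof (intro exI[of _ "e / (C + 1)"] conjI ballI impI)
    show "0 < e / (C + 1)" using e \<open>0 \<le> C\<close> by simp
    fix \<Psi> assume \<Psi>: "\<Psi> \<in> Gamma lo up" and close: "wnorm \<mu> (diff3 \<Psi> \<Phi>) < e / (C + 1)"
    have "wnorm \<mu> (diff3 (F3 \<sigma> f \<beta> r G \<Psi>) (F3 \<sigma> f \<beta> r G \<Phi>)) \<le> C * wnorm \<mu> (diff3 \<Psi> \<Phi>)"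
      unfolding C_def using \<mu> by (intro wnorm_F_diff_le \<Phi> \<Psi>) auto
    also have "\<dots> \<le> C * (e / (C + 1))"
      using close \<open>0 \<le> C\<close> by (intro mult_left_mono) auto
    also have "\<dots> < e"
      using e \<open>0 \<le> C\<close> by (simp add: field_simps)
    finally show "wnorm \<mu> (diff3 (F3 \<sigma> f \<beta> r G \<Psi>) (F3 \<sigma> f \<beta> r G \<Phi>)) < e" .
  qed
qed

lemma F_relatively_compact:
  fixes seq :: "nat \<Rightarrow> tri"
  assumes \<mu>: "0 < \<mu>" and seq: "\<forall>n. seq n \<in> Gamma lo up"
  shows "\<exists>s \<Psi>. strict_mono s \<and> \<Psi> \<in> Bmu \<mu> \<and>
           (\<lambda>n. wnorm \<mu> (diff3 (F3 \<sigma> f \<beta> r G (seq (s n))) \<Psi>)) \<longlonglongrightarrow> 0"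
proof -
  let ?F = "\<lambda>n. F3 \<sigma> f \<beta> r G (seq n)"
  have adm: "admissible_profile M (seq n)" "admissible_profile M (?F n)" for n
    using F_maps_Gamma seq Gamma_admissible(1) by blast+
  note bound = norm_profile_vec_le_Mmax[OF adm(2)]
  have equi: "\<exists>d>0. \<forall>n t t'. \<bar>t - t'\<bar> < d \<longrightarrow> norm (profile_vec (?F n) t - profile_vec (?F n) t') < e"
    if "0 < e" for e
    using F3_equicontinuous[OF that] adm(1) by blast
  obtain s g where s: "strict_mono s" and g: "continuous_on UNIV g" "\<And>t. norm (g t) \<le> 3 * Mmax"
    and unif: "\<And>R. uniform_limit {-R..R} ((\<lambda>n. profile_vec (?F n)) \<circ> s) g sequentially"
    using Arzela_Ascoli_real_line[of "\<lambda>n. profile_vec (?F n)", OF bound equi] by blast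
  define \<Psi> where "\<Psi> = (\<lambda>t. fst (g t), \<lambda>t. fst (snd (g t)), \<lambda>t. snd (snd (g t)))"
  have g_eq: "profile_vec \<Psi> = g"
    by (auto simp: profile_vec_def \<Psi>_def)
  have "\<Psi> \<in> Bmu \<mu>"
  proof (rule in_BmuI)
    show "continuous_on UNIV (comp i \<Psi>)" if "i \<in> {1,2,3}" for i
      using that g(1) by (auto simp: \<Psi>_def intro!: continuous_intros)
    show "\<bar>comp i \<Psi> t\<bar> \<le> 3 * Mmax" if "i \<in> {1,2,3}" for i t
      using abs_comp_le_norm_profile_vec[OF that, of \<Psi> t] g(2)[of t] g_eq by simp
  qed (use \<mu> in simp)
  moreover have "(\<lambda>n. wnorm \<mu> (diff3 (?F (s n)) \<Psi>)) \<longlonglongrightarrow> 0"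
  proof (rule wnorm_diff3_tendsto_zero[OF \<mu>])
    show "norm (profile_vec (?F (s n)) t) \<le> 3 * Mmax" for n t
      by (rule bound)
    show "norm (profile_vec \<Psi> t) \<le> 3 * Mmax" for t
      unfolding g_eq by (rule g(2))
    show "uniform_limit {-R..R} (\<lambda>n. profile_vec (?F (s n))) (profile_vec \<Psi>) sequentially" for R
      using unif[of R] unfolding g_eq by (simp add: o_def)
  qed
  ultimately show ?thesis
    using s by blast
qed

end

theorem mainTheorem4:
  fixes \<sigma> c \<mu> :: real
    and D r k M L \<beta> K \<delta> :: "nat \<Rightarrow> real"
    and f :: "nat \<Rightarrow> tri \<Rightarrow> real"
    and G :: "nat \<Rightarrow> real \<Rightarrow> real"
    and up lo :: tri
  assumes "\<sigma> > 0" and "c > 0"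
    and "\<forall>i\<in>{1,2,3}. D i > 0 \<and> k i > 0 \<and> M i \<ge> k i"
    and "C1 \<sigma> k f"
    and "C2 \<sigma> M f L"
    and "PQM \<sigma> M f \<beta>"
    and "Gcond D c r \<beta> G K \<delta>"
    and "upper_lower \<sigma> D c r f up lo"
    and "\<forall>i\<in>{1,2,3}. \<forall>t. 0 \<le> comp i lo t \<and> comp i lo t \<le> comp i up t \<and> comp i up t \<le> M i"
    and "0 < \<mu>" and "\<mu> < min (\<delta> 1) (min (\<delta> 2) (\<delta> 3))"
  shows
    "(\<forall>\<Phi>\<in>Gamma lo up. F3 \<sigma> f \<beta> r G \<Phi> \<in> Gamma lo up \<and>
       (\<forall>t.
         fst lo t \<le> Fop \<sigma> f \<beta> r G 1 lo t \<and>
         Fop \<sigma> f \<beta> r G 1 lo t \<le> Fop \<sigma> f \<beta> r G 1 \<Phi> t \<and>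
         Fop \<sigma> f \<beta> r G 1 \<Phi> t \<le> Fop \<sigma> f \<beta> r G 1 up t \<and>
         Fop \<sigma> f \<beta> r G 1 up t \<le> fst up t \<and>
         fst (snd lo) t \<le> Fop \<sigma> f \<beta> r G 2 (fst up, fst (snd lo), snd (snd up)) t \<and>
         Fop \<sigma> f \<beta> r G 2 (fst up, fst (snd lo), snd (snd up)) t \<le> Fop \<sigma> f \<beta> r G 2 \<Phi> t \<and>
         Fop \<sigma> f \<beta> r G 2 \<Phi> t \<le> Fop \<sigma> f \<beta> r G 2 (fst lo, fst (snd up), snd (snd lo)) t \<and>
         Fop \<sigma> f \<beta> r G 2 (fst lo, fst (snd up), snd (snd lo)) t \<le> fst (snd up) t \<and>
         snd (snd lo) t \<le> Fop \<sigma> f \<beta> r G 3 lo t \<and>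
         Fop \<sigma> f \<beta> r G 3 lo t \<le> Fop \<sigma> f \<beta> r G 3 \<Phi> t \<and>
         Fop \<sigma> f \<beta> r G 3 \<Phi> t \<le> Fop \<sigma> f \<beta> r G 3 up t \<and>
         Fop \<sigma> f \<beta> r G 3 up t \<le> snd (snd up) t))
     \<and> (F3 \<sigma> f \<beta> r G ` Gamma lo up \<subseteq> Bmu \<mu> \<and>
        (\<forall>\<Phi>\<in>Gamma lo up. \<forall>\<epsilon>>0. \<exists>\<eta>>0. \<forall>\<Psi>\<in>Gamma lo up.
           wnorm \<mu> (diff3 \<Psi> \<Phi>) < \<eta> \<longrightarrow>
           wnorm \<mu> (diff3 (F3 \<sigma> f \<beta> r G \<Psi>) (F3 \<sigma> f \<beta> r G \<Phi>)) < \<epsilon>))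
     \<and> (\<forall>seq :: nat \<Rightarrow> tri. (\<forall>n. seq n \<in> Gamma lo up) \<longrightarrow>
          (\<exists>s \<Psi>. strict_mono s \<and> \<Psi> \<in> Bmu \<mu> \<and>
             (\<lambda>n. wnorm \<mu> (diff3 (F3 \<sigma> f \<beta> r G (seq (s n))) \<Psi>)) \<longlonglongrightarrow> 0))"
proof -
  have "0 \<le> M i" if "i \<in> {1,2,3}" for i
    using assms(3) that by force
  then interpret wave_bracket \<sigma> c D r k M L \<beta> K \<delta> f G up lo
    using assms(1,4-9) by unfold_locales
  show ?thesis
    using F_maps_Gamma F_bracket F_image_Bmu[OF less_imp_le[OF assms(10)]]
      F_continuous_wnorm[OF assms(10,11)] F_relatively_compact[OF assms(10)]
    by blast
qed

end
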